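(* Let $A$ be a $2n\times 2n$ real symmetric positive definite matrix with $AJ = JA$, and fix $\xi\in\{c,w,h\}$. Then every $2n\times 2n$ real symmetric positive definite matrix $B$ with $d(B) = \Delta_\xi(A)^\uparrow$ lies in the convex hull of the symplectic orbit of $A$, i.e. $B = \sum_{j=1}^k p_j M_j^TAM_j$ for some $M_1,\dots,M_k\in\operatorname{Sp}(2n)$ and some probability vector $(p_1,\dots,p_k)$. In particular, $\operatorname{diag}(\Delta_\xi(A))\oplus\operatorname{diag}(\Delta_\xi(A))$ lies in the convex hull of the symplectic orbit of $A$.
   Context: Let $J = \begin{bmatrix} 0 & I_n \\ -I_n & 0\end{bmatrix}$; $\operatorname{Sp}(2n)$ is the group of real $2n\times 2n$ matrices $M$ with $M^TJM=J$. For a real symmetric positive definite $2n\times 2n$ matrix $A$, Williamson's theorem gives $M\in\operatorname{Sp}(2n)$ with $M^TAM = D\oplus D$, $D$ a positive diagonal $n\times n$ matrix unique up to permutation; its diagonal entries are the symplectic eigenvalues of $A$ and $d(A)$ denotes the vector of them in non-decreasing order. For $x\in\mathbb{R}^n$, $x^\uparrow$ is $x$ rearranged in non-decreasing order. Write $A = \begin{bmatrix} A_{11} & A_{12}\\ A_{12}^T & A_{22}\end{bmatrix}$ with $n\times n$ blocks, and let $\Delta_{11},\Delta_{12},\Delta_{22}\in\mathbb{R}^n$ be the vectors of diagonal entries of $A_{11},A_{12},A_{22}$. With all operations entrywise, define $\Delta_c(A) = \frac{\Delta_{11}+\Delta_{22}}{2}$, $\Delta_h(A) = \sqrt{\frac{\Delta_{11}^2+\Delta_{22}^2}{2}}$,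 $\Delta_w(A) = \sqrt{\frac{\Delta_{11}^2+\Delta_{22}^2+2\Delta_{12}^2}{2}}$. For a vector $v$, $\operatorname{diag}(v)$ is the diagonal matrix with diagonal $v$. *)

theory Defs
  imports "Jordan_Normal_Form.Matrix"
begin

definition Jmat :: "nat \<Rightarrow> real mat" where
  "Jmat n = four_block_mat (0\<^sub>m n n) (1\<^sub>m n) (- 1\<^sub>m n) (0\<^sub>m n n)"

definition symplectic :: "nat \<Rightarrow> real mat \<Rightarrow> bool" where
  "symplectic n M \<longleftrightarrow> M \<in> carrier_mat (2*n) (2*n) \<and> transpose_mat M * Jmat n * M = Jmat n"

definition pos_def :: "nat \<Rightarrow> real mat \<Rightarrow> bool" where
  "pos_def m A \<longleftrightarrow> A \<in> carrier_mat m m \<and> transpose_mat A = A \<and>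
     (\<forall>x \<in> carrier_vec m. x \<noteq> 0\<^sub>v m \<longrightarrow> x \<bullet> (A *\<^sub>v x) > 0)"

definition diagm :: "real list \<Rightarrow> real mat" where
  "diagm v = mat_diag (length v) (\<lambda>i. v ! i)"

definition dsum :: "real mat \<Rightarrow> real mat \<Rightarrow> real mat" where
  "dsum D E = four_block_mat D (0\<^sub>m (dim_row D) (dim_col E)) (0\<^sub>m (dim_row E) (dim_col D)) E"

text \<open>Symplectic eigenvalues in non-decreasing order (Williamson's theorem: the
  list exists and is unique for positive definite A).\<close>
definition sympl_eigs :: "nat \<Rightarrow> real mat \<Rightarrow> real list" where
  "sympl_eigs n A = (SOME ds. length ds = n \<and> sorted ds \<and> (\<forall>i<n. ds ! i > 0) \<and>
      (\<exists>M. symplectic n M \<and> transpose_mat M * A * M = dsum (diagm ds) (diagm ds)))"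

datatype mean_kind = Mc | Mw | Mh

definition D11 :: "nat \<Rightarrow> real mat \<Rightarrow> nat \<Rightarrow> real" where "D11 n A i = A $$ (i, i)"
definition D12 :: "nat \<Rightarrow> real mat \<Rightarrow> nat \<Rightarrow> real" where "D12 n A i = A $$ (i, n + i)"
definition D22 :: "nat \<Rightarrow> real mat \<Rightarrow> nat \<Rightarrow> real" where "D22 n A i = A $$ (n + i, n + i)"

definition Delta :: "mean_kind \<Rightarrow> nat \<Rightarrow> real mat \<Rightarrow> real list" where
  "Delta \<xi> n A = map (\<lambda>i. case \<xi> of
       Mc \<Rightarrow> (D11 n A i + D22 n A i) / 2
     | Mh \<Rightarrow> sqrt (((D11 n A i)\<^sup>2 + (D22 n A i)\<^sup>2) / 2)
     | Mw \<Rightarrow> sqrt (((D11 n A i)\<^sup>2 + (D22 n A i)\<^sup>2 + 2 * (D12 n A i)\<^sup>2) / 2)) [0..<n]"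

definition in_conv_sympl_orbit :: "nat \<Rightarrow> real mat \<Rightarrow> real mat \<Rightarrow> bool" where
  "in_conv_sympl_orbit n A B \<longleftrightarrow>
     (\<exists>k (p :: nat \<Rightarrow> real) (M :: nat \<Rightarrow> real mat).
        (\<forall>j<k. p j \<ge> 0) \<and> (\<Sum>j<k. p j) = 1 \<and> (\<forall>j<k. symplectic n (M j)) \<and>
        B = mat (2*n) (2*n) (\<lambda>(r,c). \<Sum>j<k. p j * (transpose_mat (M j) * A * M j) $$ (r, c)))"

end

(*
  If A commutes with J, then A11 = A22 and A12 is skew-symmetric, so all three means
  Delta_c, Delta_h, Delta_w equal the diagonal of A11. Conjugating by the symplectic sign change
  that flips the coordinates k and n + k and averaging with the original kills every entry
  coupling index k with a different index (mod n); doing this for k = 0, ..., n - 1 pinches A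
  down to diag(Delta) (+) diag(Delta), which is therefore a convex combination of the M^T A M.
  The convex hull of the orbit is invariant under symplectic congruence, and a symplectic
  permutation matrix reorders the diagonal, so by Williamson's theorem every B with
  d(B) = sort Delta lies in it as well.

  Williamson's theorem is proved from scratch: a congruence S reduces B to the identity, the
  nonsingular skew-symmetric matrix S^T J S is brought into orthogonal block normal form with
  2 x 2 blocks (one invariant plane at a time, found from a complex eigenvector and moved into
  place by Householder reflections), and a scaled permutation turns that form into J.
*)
theory Submission
  imports Defs "Jordan_Normal_Form.Spectral_Radius" "HOL-Combinatorics.Permutations"
begin

lemma index_mult_mat_sum:
  assumes "A \<in> carrier_mat a b" "B \<in> carrier_mat b c" "i < a" "j < c"
  shows "(A * B) $$ (i,j) = (\<Sum>l<b. A $$ (i,l) * B $$ (l,j))"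
  using assms by (auto simp: scalar_prod_def atLeast0LessThan intro!: sum.cong)

lemma index_congruence_sum:
  fixes P X Q :: "'a :: comm_semiring_0 mat"
  assumes "P \<in> carrier_mat N N" "X \<in> carrier_mat N N" "Q \<in> carrier_mat N N" "r < N" "c < N"
  shows "(transpose_mat P * X * Q) $$ (r,c) = (\<Sum>a<N. \<Sum>b<N. P $$ (a,r) * X $$ (a,b) * Q $$ (b,c))"
proof -
  have "(transpose_mat P * X * Q) $$ (r,c) = (\<Sum>b<N. (transpose_mat P * X) $$ (r,b) * Q $$ (b,c))"
    using assms by (intro index_mult_mat_sum) auto
  also have "\<dots> = (\<Sum>b<N. (\<Sum>a<N. P $$ (a,r) * X $$ (a,b)) * Q $$ (b,c))"
    using assms by (intro sum.cong refl, subst index_mult_mat_sum[of _ N N _ N]) auto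
  also have "\<dots> = (\<Sum>b<N. \<Sum>a<N. P $$ (a,r) * X $$ (a,b) * Q $$ (b,c))"
    by (simp add: sum_distrib_right)
  also have "\<dots> = (\<Sum>a<N. \<Sum>b<N. P $$ (a,r) * X $$ (a,b) * Q $$ (b,c))"
    by (rule sum.swap)
  finally show ?thesis .
qed

lemma congruence_mult:
  fixes P Q A :: "'a :: comm_semiring_0 mat"
  assumes "P \<in> carrier_mat N N" "Q \<in> carrier_mat N N" "A \<in> carrier_mat N N"
  shows "transpose_mat (P * Q) * A * (P * Q) = transpose_mat Q * (transpose_mat P * A * P) * Q"
  using assms by (simp add: transpose_mult assoc_mult_mat[of _ N N _ N _ N])

definition monomial_mat :: "nat \<Rightarrow> (nat \<Rightarrow> nat) \<Rightarrow> (nat \<Rightarrow> 'a :: zero) \<Rightarrow> 'a mat" where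
  "monomial_mat N g c = mat N N (\<lambda>(i,j). if i = g j then c j else 0)"

lemma monomial_mat_carrier[simp]: "monomial_mat N g c \<in> carrier_mat N N"
  by (simp add: monomial_mat_def)

lemma congruence_monomial_mat:
  fixes X :: "'a :: comm_semiring_1 mat"
  assumes X: "X \<in> carrier_mat N N" and g: "\<And>j. j < N \<Longrightarrow> g j < N"
  shows "transpose_mat (monomial_mat N g c) * X * monomial_mat N g c
       = mat N N (\<lambda>(i,j). c i * c j * X $$ (g i, g j))"
proof (rule eq_matI)
  fix i j assume "i < dim_row (mat N N (\<lambda>(i,j). c i * c j * X $$ (g i, g j)))"
    and "j < dim_col (mat N N (\<lambda>(i,j). c i * c j * X $$ (g i, g j)))"
  then have i: "i < N" and j: "j < N" by auto
  have "(transpose_mat (monomial_mat N g c) * X * monomial_mat N g c) $$ (i,j)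
      = (\<Sum>a<N. \<Sum>b<N. monomial_mat N g c $$ (a,i) * X $$ (a,b) * monomial_mat N g c $$ (b,j))"
    by (rule index_congruence_sum[OF _ X _ i j]) simp_all
  also have "\<dots> = (\<Sum>a<N. \<Sum>b<N. if a = g i then (if b = g j then c i * X $$ (a,b) * c j else 0) else 0)"
    using i j by (intro sum.cong refl) (simp add: monomial_mat_def)
  also have "\<dots> = (\<Sum>a<N. if a = g i then c i * X $$ (a, g j) * c j else 0)"
    using g[OF j] by (intro sum.cong refl) (simp add: sum.delta)
  also have "\<dots> = c i * c j * X $$ (g i, g j)"
    using g[OF i] by (simp add: sum.delta mult_ac)
  finally show "(transpose_mat (monomial_mat N g c) * X * monomial_mat N g c) $$ (i,j)
      = mat N N (\<lambda>(i,j). c i * c j * X $$ (g i, g j)) $$ (i, j)"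
    using i j by simp
qed (auto simp: monomial_mat_def)

section \<open>The symplectic group\<close>

lemma Jmat_carrier[simp]: "Jmat n \<in> carrier_mat (2*n) (2*n)"
  unfolding Jmat_def by (auto simp: mult_2)

lemma Jmat_dims[simp]: "dim_row (Jmat n) = 2*n" "dim_col (Jmat n) = 2*n"
  by (simp_all add: Jmat_def mult_2)

lemma index_Jmat:
  assumes "r < 2*n" "c < 2*n"
  shows "Jmat n $$ (r,c) = (if r < n \<and> c = r + n then 1 else if n \<le> r \<and> r = c + n then -1 else 0)"
  using assms unfolding Jmat_def by (auto simp: mult_2)

lemma index_mult_Jmat:
  fixes X :: "real mat"
  assumes X: "X \<in> carrier_mat (2*n) (2*n)" and r: "r < 2*n" and c: "c < 2*n"
  shows "(X * Jmat n) $$ (r,c) = (if c < n then - X $$ (r, c+n) else X $$ (r, c-n))"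
proof -
  have "(X * Jmat n) $$ (r,c) = (\<Sum>k<2*n. X $$ (r,k) * Jmat n $$ (k,c))"
    using X r c by (intro index_mult_mat_sum) auto
  also have "\<dots> = (\<Sum>k<2*n. if k = (if c < n then c + n else c - n)
                              then (if c < n then - X $$ (r,k) else X $$ (r,k)) else 0)"
    using c by (intro sum.cong refl) (auto simp: index_Jmat)
  also have "\<dots> = (if c < n then - X $$ (r, c+n) else X $$ (r, c-n))"
    using c by (simp add: sum.delta; arith)
  finally show ?thesis .
qed

lemma index_Jmat_mult:
  fixes X :: "real mat"
  assumes X: "X \<in> carrier_mat (2*n) (2*n)" and r: "r < 2*n" and c: "c < 2*n"
  shows "(Jmat n * X) $$ (r,c) = (if r < n then X $$ (r+n, c) else - X $$ (r-n, c))"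
proof -
  have "(Jmat n * X) $$ (r,c) = (\<Sum>k<2*n. Jmat n $$ (r,k) * X $$ (k,c))"
    using X r c by (intro index_mult_mat_sum) auto
  also have "\<dots> = (\<Sum>k<2*n. if k = (if r < n then r + n else r - n)
                              then (if r < n then X $$ (k,c) else - X $$ (k,c)) else 0)"
    using r by (intro sum.cong refl) (auto simp: index_Jmat)
  also have "\<dots> = (if r < n then X $$ (r+n, c) else - X $$ (r-n, c))"
    using r by (simp add: sum.delta; arith)
  finally show ?thesis .
qed

lemma Jmat_monomial:
  "Jmat n = monomial_mat (2*n) (\<lambda>c. if c < n then c + n else c - n) (\<lambda>c. if c < n then -1 else 1)"
  by (rule eq_matI) (auto simp: index_Jmat monomial_mat_def)

lemma transpose_Jmat_mult_Jmat: "transpose_mat (Jmat n) * Jmat n = 1\<^sub>m (2*n)"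
proof -
  define g where "g c = (if c < n then c + n else c - n)" for c
  define s :: "nat \<Rightarrow> real" where "s c = (if c < n then -1 else 1)" for c
  have "transpose_mat (Jmat n) * 1\<^sub>m (2*n) * Jmat n = mat (2*n) (2*n) (\<lambda>(i,j). s i * s j * 1\<^sub>m (2*n) $$ (g i, g j))"
    unfolding Jmat_monomial g_def[symmetric] s_def[symmetric]
    by (rule congruence_monomial_mat) (auto simp: g_def)
  also have "\<dots> = 1\<^sub>m (2*n)"
    unfolding g_def s_def by (rule eq_matI) auto
  finally show ?thesis
    by (subst (asm) right_mult_one_mat[of _ "2*n" "2*n"]) auto
qed

lemma symplectic_one: "symplectic n (1\<^sub>m (2*n))"
  unfolding symplectic_def by simp

lemma symplectic_mult:
  assumes "symplectic n M" "symplectic n N"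
  shows "symplectic n (M * N)"
  using assms unfolding symplectic_def by (auto simp: congruence_mult[of M "2*n"])

lemma symplectic_inverse:
  assumes M: "symplectic n M"
  obtains N where "symplectic n N" "M * N = 1\<^sub>m (2*n)"
proof -
  have Mc: "M \<in> carrier_mat (2*n) (2*n)" and MJ: "transpose_mat M * Jmat n * M = Jmat n"
    using M unfolding symplectic_def by auto
  define N where "N = transpose_mat (Jmat n) * transpose_mat M * Jmat n"
  have Nc: "N \<in> carrier_mat (2*n) (2*n)" unfolding N_def using Mc by auto
  have "N * M = transpose_mat (Jmat n) * (transpose_mat M * Jmat n * M)"
    unfolding N_def using Mc by (simp add: assoc_mult_mat[of _ "2*n" "2*n" _ "2*n" _ "2*n"])
  then have "N * M = 1\<^sub>m (2*n)" unfolding MJ transpose_Jmat_mult_Jmat .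
  then have MN: "M * N = 1\<^sub>m (2*n)" by (rule mat_mult_left_right_inverse[OF Nc Mc])
  have "transpose_mat N * Jmat n * N = transpose_mat (M * N) * Jmat n * (M * N)"
    unfolding congruence_mult[OF Mc Nc Jmat_carrier] MJ ..
  then have "symplectic n N" unfolding symplectic_def MN using Nc by simp
  with MN that show ?thesis by blast
qed

section \<open>The convex hull of a symplectic orbit\<close>

lemma in_conv_sympl_orbitE:
  assumes "in_conv_sympl_orbit n A C"
  obtains k :: nat and p M where "\<forall>j<k. p j \<ge> 0" "(\<Sum>j<k. p j) = 1" "\<forall>j<k. symplectic n (M j)"
    "C = mat (2*n) (2*n) (\<lambda>(r,c). \<Sum>j<k. p j * (transpose_mat (M j) * A * M j) $$ (r, c))"
  using assms unfolding in_conv_sympl_orbit_def by blast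

lemma in_conv_sympl_orbit_self:
  assumes "A \<in> carrier_mat (2*n) (2*n)"
  shows "in_conv_sympl_orbit n A A"
  unfolding in_conv_sympl_orbit_def
proof (intro exI[of _ "Suc 0"] exI[of _ "\<lambda>_. 1"] exI[of _ "\<lambda>_. 1\<^sub>m (2*n)"] conjI allI impI)
  show "A = mat (2*n) (2*n) (\<lambda>(r,c). \<Sum>j<Suc 0. 1 * (transpose_mat (1\<^sub>m (2*n)) * A * 1\<^sub>m (2*n)) $$ (r, c))"
    using assms by (intro eq_matI) auto
qed (auto simp: symplectic_one)

lemma sum_lessThan_add:
  fixes k l :: nat
  shows "(\<Sum>j<k+l. f j) = (\<Sum>j<k. f j) + (\<Sum>j<l. f (k + j))"
  by (induct l) (auto simp: add.assoc)

lemma in_conv_sympl_orbit_midpoint: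
  assumes C: "in_conv_sympl_orbit n A C" and C': "in_conv_sympl_orbit n A C'"
  shows "in_conv_sympl_orbit n A (mat (2*n) (2*n) (\<lambda>(r,c). (C $$ (r,c) + C' $$ (r,c)) / 2))"
proof -
  obtain k :: nat and p M where p0: "\<forall>j<k. p j \<ge> 0" and p1: "(\<Sum>j<k. p j) = 1"
    and M: "\<forall>j<k. symplectic n (M j)"
    and C_eq: "C = mat (2*n) (2*n) (\<lambda>(r,c). \<Sum>j<k. p j * (transpose_mat (M j) * A * M j) $$ (r, c))"
    using C by (rule in_conv_sympl_orbitE)
  obtain k' :: nat and p' M' where p0': "\<forall>j<k'. p' j \<ge> 0" and p1': "(\<Sum>j<k'. p' j) = 1"
    and M': "\<forall>j<k'. symplectic n (M' j)"
    and C'_eq: "C' = mat (2*n) (2*n) (\<lambda>(r,c). \<Sum>j<k'. p' j * (transpose_mat (M' j) * A * M' j) $$ (r, c))"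
    using C' by (rule in_conv_sympl_orbitE)
  define q where "q j = (if j < k then p j / 2 else p' (j - k) / 2)" for j
  define Q where "Q j = (if j < k then M j else M' (j - k))" for j
  have "(\<Sum>j<k+k'. q j * (transpose_mat (Q j) * A * Q j) $$ (r, c))
      = ((\<Sum>j<k. p j * (transpose_mat (M j) * A * M j) $$ (r, c))
        + (\<Sum>j<k'. p' j * (transpose_mat (M' j) * A * M' j) $$ (r, c))) / 2" for r c
    by (simp add: sum_lessThan_add q_def Q_def add_divide_distrib sum_divide_distrib)
  then have "mat (2*n) (2*n) (\<lambda>(r,c). (C $$ (r,c) + C' $$ (r,c)) / 2)
      = mat (2*n) (2*n) (\<lambda>(r,c). \<Sum>j<k+k'. q j * (transpose_mat (Q j) * A * Q j) $$ (r, c))"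
    by (intro eq_matI) (simp_all add: C_eq C'_eq)
  moreover have "(\<Sum>j<k+k'. q j) = 1"
    using p1 p1' by (simp add: sum_lessThan_add q_def flip: sum_divide_distrib)
  moreover have "\<forall>j<k+k'. q j \<ge> 0" "\<forall>j<k+k'. symplectic n (Q j)"
    using p0 p0' M M' by (auto simp: q_def Q_def)
  ultimately show ?thesis
    unfolding in_conv_sympl_orbit_def by blast
qed

lemma congruence_lincomb:
  fixes N :: "real mat"
  assumes N: "N \<in> carrier_mat m m" and X: "\<And>j. j < k \<Longrightarrow> X j \<in> carrier_mat m m"
  shows "transpose_mat N * mat m m (\<lambda>(r,c). \<Sum>j<k. p j * X j $$ (r,c)) * N
       = mat m m (\<lambda>(r,c). \<Sum>j<k. p j * (transpose_mat N * X j * N) $$ (r,c))"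
proof (rule eq_matI)
  fix r c assume "r < dim_row (mat m m (\<lambda>(r,c). \<Sum>j<k. p j * (transpose_mat N * X j * N) $$ (r,c)))"
    and "c < dim_col (mat m m (\<lambda>(r,c). \<Sum>j<k. p j * (transpose_mat N * X j * N) $$ (r,c)))"
  then have r: "r < m" and c: "c < m" by auto
  let ?C = "mat m m (\<lambda>(r,c). \<Sum>j<k. p j * X j $$ (r,c))"
  have "(transpose_mat N * ?C * N) $$ (r,c) = (\<Sum>a<m. \<Sum>b<m. N $$ (a,r) * ?C $$ (a,b) * N $$ (b,c))"
    by (rule index_congruence_sum[OF N _ N r c]) simp
  also have "\<dots> = (\<Sum>a<m. \<Sum>b<m. \<Sum>j<k. p j * (N $$ (a,r) * X j $$ (a,b) * N $$ (b,c)))"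
    by (intro sum.cong refl) (simp add: sum_distrib_left sum_distrib_right mult_ac)
  also have "\<dots> = (\<Sum>a<m. \<Sum>j<k. \<Sum>b<m. p j * (N $$ (a,r) * X j $$ (a,b) * N $$ (b,c)))"
    by (rule sum.cong[OF refl], rule sum.swap)
  also have "\<dots> = (\<Sum>j<k. \<Sum>a<m. \<Sum>b<m. p j * (N $$ (a,r) * X j $$ (a,b) * N $$ (b,c)))"
    by (rule sum.swap)
  also have "\<dots> = (\<Sum>j<k. p j * (\<Sum>a<m. \<Sum>b<m. N $$ (a,r) * X j $$ (a,b) * N $$ (b,c)))"
    by (simp add: sum_distrib_left)
  also have "\<dots> = (\<Sum>j<k. p j * (transpose_mat N * X j * N) $$ (r,c))"
    using X by (intro sum.cong refl) (simp add: index_congruence_sum[OF N _ N r c])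
  finally show "(transpose_mat N * ?C * N) $$ (r,c)
      = mat m m (\<lambda>(r,c). \<Sum>j<k. p j * (transpose_mat N * X j * N) $$ (r,c)) $$ (r,c)"
    using r c by simp
qed (use N in auto)

lemma in_conv_sympl_orbit_congruence:
  assumes C: "in_conv_sympl_orbit n A C" and N: "symplectic n N"
    and A: "A \<in> carrier_mat (2*n) (2*n)"
  shows "in_conv_sympl_orbit n A (transpose_mat N * C * N)"
proof -
  obtain k :: nat and p M where p0: "\<forall>j<k. p j \<ge> 0" and p1: "(\<Sum>j<k. p j) = 1"
    and M: "\<forall>j<k. symplectic n (M j)"
    and C_eq: "C = mat (2*n) (2*n) (\<lambda>(r,c). \<Sum>j<k. p j * (transpose_mat (M j) * A * M j) $$ (r, c))"
    using C by (rule in_conv_sympl_orbitE)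
  have Nc: "N \<in> carrier_mat (2*n) (2*n)" and Mc: "\<And>j. j < k \<Longrightarrow> M j \<in> carrier_mat (2*n) (2*n)"
    using N M unfolding symplectic_def by auto
  have MAM: "\<And>j. j < k \<Longrightarrow> transpose_mat (M j) * A * M j \<in> carrier_mat (2*n) (2*n)"
    using Mc A by (intro mult_carrier_mat[of _ _ "2*n"]) auto
  have "transpose_mat N * C * N
      = mat (2*n) (2*n) (\<lambda>(r,c). \<Sum>j<k. p j * (transpose_mat N * (transpose_mat (M j) * A * M j) * N) $$ (r, c))"
    unfolding C_eq by (rule congruence_lincomb[where X = "\<lambda>j. transpose_mat (M j) * A * M j", OF Nc MAM])
  also have "\<dots> = mat (2*n) (2*n) (\<lambda>(r,c). \<Sum>j<k. p j * (transpose_mat (M j * N) * A * (M j * N)) $$ (r, c))"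
    using congruence_mult[OF Mc Nc A] by simp
  finally have "transpose_mat N * C * N
      = mat (2*n) (2*n) (\<lambda>(r,c). \<Sum>j<k. p j * (transpose_mat (M j * N) * A * (M j * N)) $$ (r, c))" .
  moreover have "\<forall>j<k. symplectic n (M j * N)"
    using M N by (simp add: symplectic_mult)
  ultimately show ?thesis
    unfolding in_conv_sympl_orbit_def using p0 p1
    by (intro exI[of _ k] exI[of _ p] exI[of _ "\<lambda>j. M j * N"] conjI) simp_all
qed

lemma dsum_diagm_carrier[simp]: "dsum (diagm L) (diagm L) \<in> carrier_mat (2 * length L) (2 * length L)"
  unfolding dsum_def diagm_def by (auto simp: mult_2)

lemma index_dsum_diagm:
  assumes "length L = n" "r < 2*n" "c < 2*n"
  shows "dsum (diagm L) (diagm L) $$ (r,c) = (if r = c then L ! (r mod n) else 0)"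
  using assms unfolding dsum_def diagm_def mat_diag_def by (auto simp: mult_2 le_mod_geq)

definition flip_mat :: "nat \<Rightarrow> nat \<Rightarrow> real mat" where
  "flip_mat n k = monomial_mat (2*n) id (\<lambda>c. if c mod n = k then -1 else 1)"

lemma congruence_flip_mat:
  assumes "X \<in> carrier_mat (2*n) (2*n)"
  shows "transpose_mat (flip_mat n k) * X * flip_mat n k = mat (2*n) (2*n)
    (\<lambda>(r,c). (if r mod n = k then -1 else 1) * (if c mod n = k then -1 else 1) * X $$ (r, c))"
  unfolding flip_mat_def using congruence_monomial_mat[OF assms, of id] by simp

lemma symplectic_flip_mat: "symplectic n (flip_mat n k)"
proof -
  have "transpose_mat (flip_mat n k) * Jmat n * flip_mat n k = Jmat n"
    unfolding congruence_flip_mat[OF Jmat_carrier] by (rule eq_matI) (auto simp: index_Jmat)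
  then show ?thesis
    unfolding symplectic_def by (simp add: flip_mat_def)
qed

definition sympl_perm :: "nat \<Rightarrow> (nat \<Rightarrow> nat) \<Rightarrow> nat \<Rightarrow> nat" where
  "sympl_perm n p c = (if c < n then p c else n + p (c - n))"

definition sympl_perm_mat :: "nat \<Rightarrow> (nat \<Rightarrow> nat) \<Rightarrow> real mat" where
  "sympl_perm_mat n p = monomial_mat (2*n) (sympl_perm n p) (\<lambda>_. 1)"

lemma sympl_perm_less:
  assumes p: "p permutes {..<n}" and c: "c < 2*n"
  shows "sympl_perm n p c < 2*n"
  using permutes_in_image[OF p, of c] permutes_in_image[OF p, of "c - n"] c
  by (auto simp: sympl_perm_def)

lemma sympl_perm_eq_iff:
  assumes p: "p permutes {..<n}" and "r < 2*n" "c < 2*n"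
  shows "sympl_perm n p r = sympl_perm n p c \<longleftrightarrow> r = c"
  using permutes_in_image[OF p, of r] permutes_in_image[OF p, of c] assms
    permutes_in_image[OF p, of "r - n"] permutes_in_image[OF p, of "c - n"]
    permutes_inj[OF p, THEN injD, of r c] permutes_inj[OF p, THEN injD, of "r - n" "c - n"]
    permutes_inj[OF p, THEN injD, of "r - n" c] permutes_inj[OF p, THEN injD, of r "c - n"]
  by (auto simp: sympl_perm_def)

lemma congruence_sympl_perm_mat:
  assumes p: "p permutes {..<n}" and X: "X \<in> carrier_mat (2*n) (2*n)"
  shows "transpose_mat (sympl_perm_mat n p) * X * sympl_perm_mat n p
       = mat (2*n) (2*n) (\<lambda>(r,c). X $$ (sympl_perm n p r, sympl_perm n p c))"
  unfolding sympl_perm_mat_def using sympl_perm_less[OF p]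
  by (subst congruence_monomial_mat[OF X]) auto

lemma symplectic_sympl_perm_mat:
  assumes p: "p permutes {..<n}"
  shows "symplectic n (sympl_perm_mat n p)"
proof -
  have "transpose_mat (sympl_perm_mat n p) * Jmat n * sympl_perm_mat n p = Jmat n"
    unfolding congruence_sympl_perm_mat[OF p Jmat_carrier]
  proof (rule eq_matI)
    fix r c assume "r < dim_row (Jmat n)" "c < dim_col (Jmat n)"
    then have r: "r < 2*n" and c: "c < 2*n" by auto
    have p_less: "a < n \<Longrightarrow> p a < n" for a
      using permutes_in_image[OF p] by auto
    have p_eq: "p a = p b \<longleftrightarrow> a = b" for a b
      using permutes_inj[OF p] by (auto dest: injD)
    show "mat (2*n) (2*n) (\<lambda>(r,c). Jmat n $$ (sympl_perm n p r, sympl_perm n p c)) $$ (r,c)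
        = Jmat n $$ (r,c)"
      using r c p_less[of r] p_less[of c] p_less[of "r-n"] p_less[of "c-n"]
      by (cases "r < n"; cases "c < n") (simp_all add: index_Jmat sympl_perm_def p_eq, linarith+)
  qed auto
  then show ?thesis
    unfolding symplectic_def by (simp add: sympl_perm_mat_def)
qed

lemma congruence_sympl_perm_mat_dsum:
  assumes p: "p permutes {..<n}" and len: "length D = n"
  shows "transpose_mat (sympl_perm_mat n p) * dsum (diagm D) (diagm D) * sympl_perm_mat n p
       = dsum (diagm (permute_list p D)) (diagm (permute_list p D))"
proof -
  have len_p: "length (permute_list p D) = n"
    using len by simp
  show ?thesis
    unfolding congruence_sympl_perm_mat[OF p dsum_diagm_carrier[of D, unfolded len]]
  proof (rule eq_matI)
    fix r c assume "r < dim_row (dsum (diagm (permute_list p D)) (diagm (permute_list p D)))"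
      "c < dim_col (dsum (diagm (permute_list p D)) (diagm (permute_list p D)))"
    then have r: "r < 2*n" and c: "c < 2*n"
      using dsum_diagm_carrier[of "permute_list p D"] len_p by auto
    have "permute_list p D ! (r mod n) = D ! p (r mod n)"
      using r len p by (intro permute_list_nth) auto
    moreover have "sympl_perm n p r mod n = p (r mod n)"
      using r permutes_in_image[OF p, of r] permutes_in_image[OF p, of "r - n"]
      by (auto simp: sympl_perm_def le_mod_geq)
    ultimately show "mat (2*n) (2*n) (\<lambda>(r,c). dsum (diagm D) (diagm D) $$ (sympl_perm n p r, sympl_perm n p c)) $$ (r,c)
      = dsum (diagm (permute_list p D)) (diagm (permute_list p D)) $$ (r,c)"
      unfolding index_dsum_diagm[OF len_p r c] using r c sympl_perm_less[OF p r] sympl_perm_less[OF p c]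
      by (cases "r = c") (simp_all add: index_dsum_diagm[OF len] sympl_perm_eq_iff[OF p r c])
  qed (use len in \<open>auto simp: dsum_def diagm_def mat_diag_def mult_2\<close>)
qed

section \<open>Pinching a matrix that commutes with J\<close>

definition pinch :: "nat \<Rightarrow> real mat \<Rightarrow> nat \<Rightarrow> real mat" where
  "pinch n A k = mat (2*n) (2*n) (\<lambda>(r,c).
     if (r mod n < k \<or> c mod n < k) \<and> r mod n \<noteq> c mod n then 0 else A $$ (r,c))"

lemma in_conv_sympl_orbit_pinch:
  assumes A: "A \<in> carrier_mat (2*n) (2*n)"
  shows "in_conv_sympl_orbit n A (pinch n A k)"
proof (induction k)
  case 0
  have "pinch n A 0 = A"
    using A by (intro eq_matI) (auto simp: pinch_def)
  then show ?case
    using in_conv_sympl_orbit_self[OF A] by simp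
next
  case (Suc k)
  have flipped: "in_conv_sympl_orbit n A (transpose_mat (flip_mat n k) * pinch n A k * flip_mat n k)"
    by (rule in_conv_sympl_orbit_congruence[OF Suc.IH symplectic_flip_mat A])
  \<comment> \<open>conjugation by flip_mat n k negates exactly the entries coupling index k with another index\<close>
  have "mat (2*n) (2*n) (\<lambda>(r,c). (pinch n A k $$ (r,c)
          + (transpose_mat (flip_mat n k) * pinch n A k * flip_mat n k) $$ (r,c)) / 2)
      = pinch n A (Suc k)"
    by (subst congruence_flip_mat) (auto intro!: eq_matI simp: pinch_def)
  with in_conv_sympl_orbit_midpoint[OF Suc.IH flipped] show ?case
    by simp
qed

lemma Jmat_commute_entries:
  fixes A :: "real mat"
  assumes A: "A \<in> carrier_mat (2*n) (2*n)" and sym: "transpose_mat A = A"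
    and comm: "A * Jmat n = Jmat n * A" and i: "i < n"
  shows "A $$ (n+i, n+i) = A $$ (i,i)" "A $$ (i, n+i) = 0" "A $$ (n+i, i) = 0"
proof -
  have "(A * Jmat n) $$ (i, n+i) = (Jmat n * A) $$ (i, n+i)"
    using comm by simp
  then show "A $$ (n+i, n+i) = A $$ (i,i)"
    using i by (simp add: index_mult_Jmat[OF A] index_Jmat_mult[OF A] add.commute)
  have "A $$ (n+i, i) = A $$ (i, n+i)"
    using arg_cong[OF sym, of "\<lambda>M. M $$ (i, n+i)"] A i by auto
  moreover have "(A * Jmat n) $$ (i, i) = (Jmat n * A) $$ (i, i)"
    using comm by simp
  then have "- A $$ (i, i+n) = A $$ (i+n, i)"
    using i by (simp add: index_mult_Jmat[OF A] index_Jmat_mult[OF A])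
  ultimately show "A $$ (i, n+i) = 0" "A $$ (n+i, i) = 0"
    by (simp_all add: add.commute)
qed

lemma pos_def_diag_pos:
  assumes "pos_def N A" "i < N"
  shows "A $$ (i,i) > 0"
proof -
  have "unit_vec N i \<bullet> (A *\<^sub>v unit_vec N i) > 0"
    using assms unfolding pos_def_def by auto
  moreover have "unit_vec N i \<bullet> (A *\<^sub>v unit_vec N i) = A $$ (i,i)"
    using assms unfolding pos_def_def by auto
  ultimately show ?thesis by simp
qed

lemma Delta_Jmat_commute:
  assumes A: "pos_def (2*n) A" and comm: "A * Jmat n = Jmat n * A" and i: "i < n"
  shows "Delta \<xi> n A ! i = A $$ (i,i)"
proof -
  have "A \<in> carrier_mat (2*n) (2*n)" "transpose_mat A = A"
    using A unfolding pos_def_def by auto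
  note entries = Jmat_commute_entries[OF this comm i]
  have "sqrt (((A $$ (i,i))\<^sup>2 + (A $$ (i,i))\<^sup>2) / 2) = A $$ (i,i)"
    using pos_def_diag_pos[OF A, of i] i by simp
  then show ?thesis
    using i entries by (cases \<xi>) (simp_all add: Delta_def D11_def D22_def D12_def)
qed

lemma pinch_Jmat_commute:
  assumes A: "pos_def (2*n) A" and comm: "A * Jmat n = Jmat n * A"
  shows "pinch n A n = dsum (diagm (Delta \<xi> n A)) (diagm (Delta \<xi> n A))"
proof -
  have Ac: "A \<in> carrier_mat (2*n) (2*n)" and sym: "transpose_mat A = A"
    using A unfolding pos_def_def by auto
  have len: "length (Delta \<xi> n A) = n"
    by (simp add: Delta_def)
  show ?thesis
  proof (rule eq_matI)
    fix r c assume "r < dim_row (dsum (diagm (Delta \<xi> n A)) (diagm (Delta \<xi> n A)))"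
      and "c < dim_col (dsum (diagm (Delta \<xi> n A)) (diagm (Delta \<xi> n A)))"
    then have r: "r < 2*n" and c: "c < 2*n"
      using dsum_diagm_carrier[of "Delta \<xi> n A"] len by auto
    then have rm: "r mod n < n"
      by (cases "n = 0") auto
    have "r = r mod n \<or> r = n + r mod n" "c = c mod n \<or> c = n + c mod n"
      using r c by (auto simp: mod_if)
    then show "pinch n A n $$ (r,c) = dsum (diagm (Delta \<xi> n A)) (diagm (Delta \<xi> n A)) $$ (r,c)"
      unfolding index_dsum_diagm[OF len r c] Delta_Jmat_commute[OF A comm rm]
      using r c rm Jmat_commute_entries[OF Ac sym comm rm] by (auto simp: pinch_def)
  qed (auto simp: pinch_def len dsum_def diagm_def mat_diag_def mult_2)
qed

lemma dsum_Delta_in_conv_sympl_orbit: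
  assumes "pos_def (2*n) A" "A * Jmat n = Jmat n * A"
  shows "in_conv_sympl_orbit n A (dsum (diagm (Delta \<xi> n A)) (diagm (Delta \<xi> n A)))"
proof -
  have "A \<in> carrier_mat (2*n) (2*n)"
    using assms(1) unfolding pos_def_def by auto
  then show ?thesis
    using in_conv_sympl_orbit_pinch[of A n n] pinch_Jmat_commute[OF assms] by simp
qed

section \<open>Positive definite matrices are congruent to the identity\<close>

lemma quadratic_form_congruence:
  fixes B L :: "real mat"
  assumes B: "B \<in> carrier_mat N N" and L: "L \<in> carrier_mat N N" and x: "x \<in> carrier_vec N"
  shows "x \<bullet> ((transpose_mat L * B * L) *\<^sub>v x) = (L *\<^sub>v x) \<bullet> (B *\<^sub>v (L *\<^sub>v x))"
proof -
  have Bw: "B *\<^sub>v (L *\<^sub>v x) \<in> carrier_vec N" and w: "L *\<^sub>v x \<in> carrier_vec N"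
    using B L x by auto
  have "(transpose_mat L * B * L) *\<^sub>v x = transpose_mat L *\<^sub>v (B *\<^sub>v (L *\<^sub>v x))"
    using B L x by (simp add: assoc_mult_mat_vec[of _ N N _ N])
  then have "x \<bullet> ((transpose_mat L * B * L) *\<^sub>v x) = (transpose_mat L *\<^sub>v (B *\<^sub>v (L *\<^sub>v x))) \<bullet> x"
    using comm_scalar_prod[OF x] L Bw by simp
  also have "\<dots> = (B *\<^sub>v (L *\<^sub>v x)) \<bullet> (L *\<^sub>v x)"
    by (rule transpose_vec_mult_scalar[OF L x Bw])
  also have "\<dots> = (L *\<^sub>v x) \<bullet> (B *\<^sub>v (L *\<^sub>v x))"
    by (rule comm_scalar_prod[OF Bw w])
  finally show ?thesis .
qed

lemma pos_def_congruence:
  fixes B L :: "real mat"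
  assumes B: "pos_def N B" and L: "L \<in> carrier_mat N N" and det: "det L \<noteq> 0"
  shows "pos_def N (transpose_mat L * B * L)"
  unfolding pos_def_def
proof (intro conjI ballI impI)
  have Bc: "B \<in> carrier_mat N N" and sym: "transpose_mat B = B"
    using B unfolding pos_def_def by auto
  show "transpose_mat L * B * L \<in> carrier_mat N N"
    using Bc L by auto
  have "transpose_mat (transpose_mat L * B * L) = transpose_mat L * transpose_mat (transpose_mat L * B)"
    using Bc L by (intro transpose_mult[of _ N N]) auto
  also have "transpose_mat (transpose_mat L * B) = transpose_mat B * L"
    using Bc L by (subst transpose_mult[of _ N N]) auto
  finally show "transpose_mat (transpose_mat L * B * L) = transpose_mat L * B * L"
    using Bc L sym by (simp add: assoc_mult_mat[of _ N N _ N _ N])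
  fix x :: "real vec" assume x: "x \<in> carrier_vec N" and x0: "x \<noteq> 0\<^sub>v N"
  have "L *\<^sub>v x \<noteq> 0\<^sub>v N"
    using det det_0_iff_vec_prod_zero[OF L] x x0 by auto
  then have "(L *\<^sub>v x) \<bullet> (B *\<^sub>v (L *\<^sub>v x)) > 0"
    using B L x unfolding pos_def_def by auto
  then show "x \<bullet> ((transpose_mat L * B * L) *\<^sub>v x) > 0"
    by (simp add: quadratic_form_congruence[OF Bc L x])
qed

lemma pos_def_lower_block:
  fixes X Y :: "real mat"
  assumes pd: "pos_def (k + m) (four_block_mat X (0\<^sub>m k m) (0\<^sub>m m k) Y)"
    and X: "X \<in> carrier_mat k k" and Y: "Y \<in> carrier_mat m m"
  shows "pos_def m Y"
  unfolding pos_def_def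
proof (intro conjI ballI impI)
  let ?B = "four_block_mat X (0\<^sub>m k m) (0\<^sub>m m k) Y"
  show "Y \<in> carrier_mat m m" by fact
  have B_sym: "transpose_mat ?B = ?B"
    using pd unfolding pos_def_def by auto
  show "transpose_mat Y = Y"
  proof (rule eq_matI)
    fix i j assume "i < dim_row Y" "j < dim_col Y"
    moreover have "transpose_mat ?B $$ (k + i, k + j) = ?B $$ (k + i, k + j)"
      using B_sym by simp
    ultimately show "transpose_mat Y $$ (i,j) = Y $$ (i,j)"
      using X Y by simp
  qed (use Y in auto)
  fix x :: "real vec" assume x: "x \<in> carrier_vec m" and x0: "x \<noteq> 0\<^sub>v m"
  have "0\<^sub>v k @\<^sub>v x \<noteq> 0\<^sub>v (k + m)"
  proof
    assume z0: "0\<^sub>v k @\<^sub>v x = 0\<^sub>v (k + m)"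
    have "x = 0\<^sub>v m"
    proof (rule eq_vecI)
      fix i assume "i < dim_vec (0\<^sub>v m :: real vec)"
      then show "x $ i = 0\<^sub>v m $ i"
        using arg_cong[OF z0, of "\<lambda>v. v $ (k + i)"] x by simp
    qed (use x in auto)
    with x0 show False ..
  qed
  then have z: "0\<^sub>v k @\<^sub>v x \<in> carrier_vec (k + m)" "0\<^sub>v k @\<^sub>v x \<noteq> 0\<^sub>v (k + m)"
    using x by auto
  have "(0\<^sub>v k @\<^sub>v x) \<bullet> (?B *\<^sub>v (0\<^sub>v k @\<^sub>v x)) = x \<bullet> (Y *\<^sub>v x)"
    using X Y x by (simp add: mult_mat_vec_split scalar_prod_append[of _ k _ m])
  moreover have "(0\<^sub>v k @\<^sub>v x) \<bullet> (?B *\<^sub>v (0\<^sub>v k @\<^sub>v x)) > 0"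
    using pd z unfolding pos_def_def by blast
  ultimately show "x \<bullet> (Y *\<^sub>v x) > 0" by simp
qed

lemma congruence_block_diag:
  fixes P X Q Y :: "'a :: comm_ring_1 mat"
  assumes P: "P \<in> carrier_mat k k" and X: "X \<in> carrier_mat k k"
    and Q: "Q \<in> carrier_mat m m" and Y: "Y \<in> carrier_mat m m"
  shows "transpose_mat (four_block_mat P (0\<^sub>m k m) (0\<^sub>m m k) Q) * four_block_mat X (0\<^sub>m k m) (0\<^sub>m m k) Y
       * four_block_mat P (0\<^sub>m k m) (0\<^sub>m m k) Q
     = four_block_mat (transpose_mat P * X * P) (0\<^sub>m k m) (0\<^sub>m m k) (transpose_mat Q * Y * Q)"
proof -
  have "transpose_mat (four_block_mat P (0\<^sub>m k m) (0\<^sub>m m k) Q)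
      = four_block_mat (transpose_mat P) (0\<^sub>m k m) (0\<^sub>m m k) (transpose_mat Q)"
    using P Q by (subst transpose_four_block_mat[of _ k k _ m _ m]) auto
  moreover have "four_block_mat (transpose_mat P) (0\<^sub>m k m) (0\<^sub>m m k) (transpose_mat Q)
      * four_block_mat X (0\<^sub>m k m) (0\<^sub>m m k) Y
      = four_block_mat (transpose_mat P * X) (0\<^sub>m k m) (0\<^sub>m m k) (transpose_mat Q * Y)"
    using P Q X Y by (subst mult_four_block_mat[of _ k k _ m _ m _ _ k _ m]) auto
  moreover have "four_block_mat (transpose_mat P * X) (0\<^sub>m k m) (0\<^sub>m m k) (transpose_mat Q * Y)
      * four_block_mat P (0\<^sub>m k m) (0\<^sub>m m k) Q
      = four_block_mat (transpose_mat P * X * P) (0\<^sub>m k m) (0\<^sub>m m k) (transpose_mat Q * Y * Q)"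
    using P Q X Y by (subst mult_four_block_mat[of _ k k _ m _ m _ _ k _ m]) auto
  ultimately show ?thesis by simp
qed

lemma sum_unit_plus_first:
  fixes f :: "nat \<Rightarrow> real"
  assumes "i < N"
  shows "(\<Sum>a<N. ((if a = i then 1 else 0) + (if a = 0 then c else 0)) * f a) = f i + c * f 0"
proof -
  have "(\<Sum>a<N. ((if a = i then 1 else 0) + (if a = 0 then c else 0)) * f a)
      = (\<Sum>a<N. (if a = i then f a else 0) + (if a = 0 then c * f a else 0))"
    by (rule sum.cong) (auto simp: algebra_simps)
  also have "\<dots> = f i + c * f 0"
    using assms by (simp add: sum.distrib sum.delta)
  finally show ?thesis .
qed

lemma index_congruence_column_op:
  fixes B :: "real mat" and al :: "nat \<Rightarrow> real"
  assumes B: "B \<in> carrier_mat N N" and i: "i < N" and j: "j < N"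
  defines "L \<equiv> mat N N (\<lambda>(i,j). (if i = j then 1 else 0) + (if i = 0 then al j else 0))"
  shows "(transpose_mat L * B * L) $$ (i,j)
       = B $$ (i,j) + al j * B $$ (i,0) + al i * (B $$ (0,j) + al j * B $$ (0,0))"
proof -
  have "(transpose_mat L * B * L) $$ (i,j) = (\<Sum>a<N. \<Sum>c<N. L $$ (a,i) * B $$ (a,c) * L $$ (c,j))"
    by (rule index_congruence_sum[OF _ B _ i j]) (simp_all add: L_def)
  also have "\<dots> = (\<Sum>a<N. ((if a = i then 1 else 0) + (if a = 0 then al i else 0)) *
      (\<Sum>c<N. ((if c = j then 1 else 0) + (if c = 0 then al j else 0)) * B $$ (a,c)))"
    using i j by (intro sum.cong refl) (simp add: L_def sum_distrib_left mult_ac)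
  also have "\<dots> = (\<Sum>a<N. ((if a = i then 1 else 0) + (if a = 0 then al i else 0)) *
      (B $$ (a,j) + al j * B $$ (a,0)))"
    using j by (simp only: sum_unit_plus_first)
  also have "\<dots> = B $$ (i,j) + al j * B $$ (i,0) + al i * (B $$ (0,j) + al j * B $$ (0,0))"
    using i by (simp only: sum_unit_plus_first)
  finally show ?thesis .
qed

lemma schur_complement_congruence:
  fixes B :: "real mat"
  assumes B: "pos_def (Suc m) B"
  defines "b \<equiv> B $$ (0,0)"
  defines "L \<equiv> mat (Suc m) (Suc m) (\<lambda>(i,j). (if i = j then 1 else 0)
                                            + (if i = 0 \<and> j \<noteq> 0 then - B $$ (0,j) / b else 0))"
  defines "B1 \<equiv> mat m m (\<lambda>(i,j). B $$ (Suc i, Suc j) - B $$ (0, Suc i) * B $$ (0, Suc j) / b)"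
  shows "transpose_mat L * B * L = four_block_mat (mat 1 1 (\<lambda>_. b)) (0\<^sub>m 1 m) (0\<^sub>m m 1) B1"
proof (rule eq_matI)
  define al where "al j = (if j = 0 then 0 else - B $$ (0,j) / b)" for j
  have Bc: "B \<in> carrier_mat (Suc m) (Suc m)" and sym: "transpose_mat B = B"
    using B unfolding pos_def_def by auto
  have b: "b > 0"
    unfolding b_def using pos_def_diag_pos[OF B] by auto
  have L_eq: "L = mat (Suc m) (Suc m) (\<lambda>(i,j). (if i = j then 1 else 0) + (if i = 0 then al j else 0))"
    unfolding L_def al_def by (auto intro!: cong_mat)
  fix i j assume "i < dim_row (four_block_mat (mat 1 1 (\<lambda>_. b)) (0\<^sub>m 1 m) (0\<^sub>m m 1) B1)"
    "j < dim_col (four_block_mat (mat 1 1 (\<lambda>_. b)) (0\<^sub>m 1 m) (0\<^sub>m m 1) B1)"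
  then have i: "i < Suc m" and j: "j < Suc m"
    unfolding B1_def by auto
  have B_sym: "B $$ (i,0) = B $$ (0,i)"
    using arg_cong[OF sym, of "\<lambda>M. M $$ (0,i)"] Bc i by auto
  show "(transpose_mat L * B * L) $$ (i,j) = four_block_mat (mat 1 1 (\<lambda>_. b)) (0\<^sub>m 1 m) (0\<^sub>m m 1) B1 $$ (i,j)"
    unfolding L_eq index_congruence_column_op[OF Bc i j]
    using i j b B_sym by (cases i; cases j) (auto simp: al_def b_def B1_def field_simps)
qed (auto simp: B1_def L_def)

lemma pos_def_congruent_one:
  "pos_def N B \<Longrightarrow> \<exists>S. S \<in> carrier_mat N N \<and> transpose_mat S * B * S = 1\<^sub>m N"
proof (induction N arbitrary: B)
  case 0
  then show ?case
    by (intro exI[of _ "1\<^sub>m 0"]) (auto simp: pos_def_def intro!: eq_matI)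
next
  case (Suc m)
  define b where "b = B $$ (0,0)"
  define L where "L = mat (Suc m) (Suc m) (\<lambda>(i,j). (if i = j then 1 else 0)
                                            + (if i = 0 \<and> j \<noteq> 0 then - B $$ (0,j) / b else (0::real)))"
  define B1 where "B1 = mat m m (\<lambda>(i,j). B $$ (Suc i, Suc j) - B $$ (0, Suc i) * B $$ (0, Suc j) / b)"
  have Bc: "B \<in> carrier_mat (Suc m) (Suc m)"
    using Suc.prems unfolding pos_def_def by auto
  have b: "b > 0"
    unfolding b_def using pos_def_diag_pos[OF Suc.prems] by auto
  have Lc: "L \<in> carrier_mat (Suc m) (Suc m)" and B1c: "B1 \<in> carrier_mat m m"
    unfolding L_def B1_def by auto
  have LBL: "transpose_mat L * B * L = four_block_mat (mat 1 1 (\<lambda>_. b)) (0\<^sub>m 1 m) (0\<^sub>m m 1) B1"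
    unfolding L_def B1_def b_def by (rule schur_complement_congruence[OF Suc.prems])
  have "det L = 1"
    using Lc by (subst det_upper_triangular[of _ "Suc m"])
      (auto simp: upper_triangular_def L_def prod_list_diag_prod)
  then have "pos_def (1 + m) (four_block_mat (mat 1 1 (\<lambda>_. b)) (0\<^sub>m 1 m) (0\<^sub>m m 1) B1)"
    using pos_def_congruence[OF Suc.prems Lc] unfolding LBL by simp
  then have "pos_def m B1"
    by (rule pos_def_lower_block) (auto simp: B1c)
  then obtain S1 where S1c: "S1 \<in> carrier_mat m m" and S1: "transpose_mat S1 * B1 * S1 = 1\<^sub>m m"
    using Suc.IH by blast
  define E where "E = four_block_mat (mat 1 1 (\<lambda>_. 1 / sqrt b)) (0\<^sub>m 1 m) (0\<^sub>m m 1) S1"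
  have Ec: "E \<in> carrier_mat (Suc m) (Suc m)"
    unfolding E_def using S1c by auto
  have "transpose_mat (mat 1 1 (\<lambda>_. 1 / sqrt b)) * mat 1 1 (\<lambda>_. b) * mat 1 1 (\<lambda>_. 1 / sqrt b) = 1\<^sub>m 1"
    using b by (auto intro!: eq_matI simp: scalar_prod_def)
  then have "transpose_mat E * (transpose_mat L * B * L) * E = 1\<^sub>m (Suc m)"
    unfolding LBL E_def using S1c B1c by (subst congruence_block_diag) (auto simp: S1)
  then have "transpose_mat (L * E) * B * (L * E) = 1\<^sub>m (Suc m)"
    by (simp add: congruence_mult[OF Lc Ec Bc])
  moreover have "L * E \<in> carrier_mat (Suc m) (Suc m)"
    using Lc Ec by simp
  ultimately show ?case by blast
qed

section \<open>Householder reflections\<close>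

definition householder :: "nat \<Rightarrow> (nat \<Rightarrow> real) \<Rightarrow> real mat" where
  "householder N w = mat N N (\<lambda>(i,j). (if i = j then 1 else 0) - 2 / (\<Sum>k<N. (w k)\<^sup>2) * w i * w j)"

lemma householder_carrier[simp]: "householder N w \<in> carrier_mat N N"
  unfolding householder_def by auto

lemma householder_dims[simp]: "dim_row (householder N w) = N" "dim_col (householder N w) = N"
  unfolding householder_def by auto

lemma transpose_householder: "transpose_mat (householder N w) = householder N w"
  unfolding householder_def by (rule eq_matI) auto

lemma householder_orthogonal: "transpose_mat (householder N w) * householder N w = 1\<^sub>m N"
proof (rule eq_matI)
  fix i j assume "i < dim_row (1\<^sub>m N :: real mat)" "j < dim_col (1\<^sub>m N :: real mat)"
  then have i: "i < N" and j: "j < N" by auto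
  define ww where "ww = (\<Sum>k<N. (w k)\<^sup>2)"
  define c where "c = 2 / ww"
  have cc_ww: "c * c * ww = 2 * c"
    unfolding c_def by (cases "ww = 0") (auto simp: power2_eq_square)
  have "(transpose_mat (householder N w) * householder N w) $$ (i,j)
      = (\<Sum>k<N. householder N w $$ (k,i) * householder N w $$ (k,j))"
    using i j by (subst index_mult_mat_sum[of _ N N _ N]) (auto intro!: sum.cong)
  also have "\<dots> = (\<Sum>k<N. ((if k = i then 1 else 0) - c * w k * w i) * ((if k = j then 1 else 0) - c * w k * w j))"
    using i j by (intro sum.cong refl) (auto simp: householder_def c_def ww_def)
  also have "\<dots> = (\<Sum>k<N. (if k = i then (if k = j then 1 else 0) else 0) - (if k = i then c * w k * w j else 0)
      - (if k = j then c * w k * w i else 0) + c * c * w i * w j * (w k)\<^sup>2)"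
    by (rule sum.cong) (auto simp: algebra_simps power2_eq_square)
  also have "\<dots> = (if i = j then 1 else 0) - c * w i * w j - c * w j * w i + c * c * ww * w i * w j"
    using i j by (simp add: sum.distrib sum_subtractf sum.delta ww_def flip: sum_distrib_left)
  also have "\<dots> = (if i = j then 1 else 0)"
    unfolding cc_ww by (simp add: algebra_simps)
  finally show "(transpose_mat (householder N w) * householder N w) $$ (i,j) = 1\<^sub>m N $$ (i,j)"
    using i j by simp
qed auto

lemma householder_maps_unit_vec:
  assumes k: "k < N" and u: "(\<Sum>i<N. (u i)\<^sup>2) = 1" and i: "i < N"
  shows "householder N (\<lambda>i. u i - (if i = k then 1 else 0)) $$ (i,k) = u i"
proof -
  define w :: "nat \<Rightarrow> real" where "w = (\<lambda>i. u i - (if i = k then 1 else 0))"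
  have "(\<Sum>j<N. (w j)\<^sup>2) = (\<Sum>j<N. (u j)\<^sup>2 - 2 * (if j = k then u j else 0) + (if j = k then 1 else 0))"
    by (rule sum.cong) (auto simp: w_def power2_eq_square algebra_simps)
  also have "\<dots> = 2 - 2 * u k"
    using k u by (simp add: sum.distrib sum_subtractf sum.delta flip: sum_distrib_left)
  finally have ww: "(\<Sum>j<N. (w j)\<^sup>2) = 2 - 2 * u k" .
  have H: "householder N w $$ (i,k) = (if i = k then 1 else 0) - 2 / (\<Sum>j<N. (w j)\<^sup>2) * w i * (u k - 1)"
    using i k by (simp add: householder_def w_def)
  have "householder N w $$ (i,k) = u i"
  proof (cases "u k = 1")
    case True
    then have "\<forall>j\<in>{..<N}. (w j)\<^sup>2 = 0"
      using ww by (subst sum_nonneg_eq_0_iff[symmetric]) auto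
    then have "w i = 0"
      using i by auto
    then show ?thesis
      using H True by (simp add: w_def split: if_splits)
  next
    case False
    then have c: "2 / (2 - 2 * u k) * (u k - 1) = -1"
      by (simp add: field_simps)
    have "householder N w $$ (i,k) = (if i = k then 1 else 0) - 2 / (2 - 2 * u k) * (u k - 1) * w i"
      using H unfolding ww by (simp only: mult_ac)
    then have "householder N w $$ (i,k) = (if i = k then 1 else 0) + w i"
      unfolding c by simp
    then show ?thesis
      by (simp add: w_def)
  qed
  then show ?thesis
    by (simp only: w_def)
qed

lemma householder_fixes_unit_vec:
  assumes "w k = 0" "i < N" "k < N"
  shows "householder N w $$ (i,k) = (if i = k then 1 else 0)"
  using assms unfolding householder_def by auto

lemma scalar_prod_orthonormal_mat:
  fixes Q :: "real mat"
  assumes Q: "Q \<in> carrier_mat N N" and Q_orth: "transpose_mat Q * Q = 1\<^sub>m N" and v: "v \<in> carrier_vec N"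
  shows "(Q *\<^sub>v v) \<bullet> (Q *\<^sub>v v) = v \<bullet> v"
proof -
  have "(Q *\<^sub>v v) \<bullet> (Q *\<^sub>v v) = (transpose_mat Q *\<^sub>v (Q *\<^sub>v v)) \<bullet> v"
    using transpose_vec_mult_scalar[OF Q v, of "Q *\<^sub>v v"] Q v by simp
  also have "transpose_mat Q *\<^sub>v (Q *\<^sub>v v) = v"
    using Q v Q_orth by (simp flip: assoc_mult_mat_vec[of _ N N _ N])
  finally show ?thesis .
qed

lemma sum_squares_scalar_prod: "(v :: real vec) \<in> carrier_vec N \<Longrightarrow> v \<bullet> v = (\<Sum>i<N. (v $ i)\<^sup>2)"
  unfolding scalar_prod_def power2_eq_square by (auto simp: atLeast0LessThan)

lemma orthonormal_mat_fixing_first_column: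
  fixes v :: "real vec"
  assumes N: "1 < N" and v: "v \<in> carrier_vec N" "v $ 0 = 0" "v \<bullet> v = 1"
  obtains H where "H \<in> carrier_mat N N" "transpose_mat H * H = 1\<^sub>m N"
    "col H 0 = unit_vec N 0" "col H 1 = v"
proof
  define H where "H = householder N (\<lambda>i. v $ i - (if i = 1 then 1 else 0))"
  show "H \<in> carrier_mat N N" "transpose_mat H * H = 1\<^sub>m N"
    unfolding H_def by (simp_all add: householder_orthogonal)
  show "col H 1 = v"
    using householder_maps_unit_vec[of 1 N "\<lambda>i. v $ i"] N v sum_squares_scalar_prod[OF v(1)]
    unfolding H_def by (intro eq_vecI) auto
  show "col H 0 = unit_vec N 0"
    using householder_fixes_unit_vec[of _ 0 _ N] N v
    unfolding H_def by (intro eq_vecI) auto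
qed

lemma orthonormal_mat_with_columns:
  fixes x y :: "nat \<Rightarrow> real"
  assumes N: "1 < N" and x1: "(\<Sum>i<N. (x i)\<^sup>2) = 1" and y1: "(\<Sum>i<N. (y i)\<^sup>2) = 1"
    and xy: "(\<Sum>i<N. x i * y i) = 0"
  shows "\<exists>Q. Q \<in> carrier_mat N N \<and> transpose_mat Q * Q = 1\<^sub>m N \<and> (\<forall>i<N. Q $$ (i,0) = x i \<and> Q $$ (i,1) = y i)"
proof -
  define H1 where "H1 = householder N (\<lambda>i. x i - (if i = 0 then 1 else 0))"
  have H1c: "H1 \<in> carrier_mat N N" and H1_sym: "transpose_mat H1 = H1"
    unfolding H1_def by (simp_all add: transpose_householder)
  have H1_orth: "transpose_mat H1 * H1 = 1\<^sub>m N"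
    unfolding H1_def by (rule householder_orthogonal)
  have H1_col: "H1 $$ (i,0) = x i" "H1 $$ (0,i) = x i" if "i < N" for i
    using householder_maps_unit_vec[of 0 N x i] arg_cong[OF H1_sym, of "\<lambda>M. M $$ (i,0)"]
      N x1 that H1c unfolding H1_def by auto
  define y' where "y' = H1 *\<^sub>v vec N y"
  have y'c: "y' \<in> carrier_vec N"
    unfolding y'_def using H1c by simp
  have H1_y': "H1 *\<^sub>v y' = vec N y"
    unfolding y'_def using H1c H1_orth H1_sym by (simp flip: assoc_mult_mat_vec[of _ N N _ N])
  have y'0: "y' $ 0 = 0"
    using N H1c xy H1_col(2) by (simp add: y'_def scalar_prod_def atLeast0LessThan)
  have "y' \<bullet> y' = vec N y \<bullet> vec N y"
    unfolding y'_def by (rule scalar_prod_orthonormal_mat[OF H1c H1_orth]) simp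
  then have y'1: "y' \<bullet> y' = 1"
    using y1 by (simp add: sum_squares_scalar_prod[of "vec N y" N])
  obtain H2 where H2c: "H2 \<in> carrier_mat N N" and H2_orth: "transpose_mat H2 * H2 = 1\<^sub>m N"
    and H2_col0: "col H2 0 = unit_vec N 0" and H2_col1: "col H2 1 = y'"
    using orthonormal_mat_fixing_first_column[OF N y'c y'0 y'1] .
  define Q where "Q = H1 * H2"
  have Qc: "Q \<in> carrier_mat N N"
    unfolding Q_def using H1c H2c by simp
  have "transpose_mat Q * 1\<^sub>m N * Q = transpose_mat H2 * (transpose_mat H1 * 1\<^sub>m N * H1) * H2"
    unfolding Q_def by (rule congruence_mult[OF H1c H2c]) simp
  then have Q_orth: "transpose_mat Q * Q = 1\<^sub>m N"
    using Qc H1c H2c H1_orth H2_orth by simp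
  have "Q $$ (i,0) = x i \<and> Q $$ (i,1) = y i" if i: "i < N" for i
  proof
    have "Q $$ (i,0) = row H1 i \<bullet> unit_vec N 0"
      unfolding Q_def using i N H1c H2c H2_col0 by simp
    then show "Q $$ (i,0) = x i"
      using i N H1c H1_col(1) by simp
    have "Q $$ (i,1) = (H1 *\<^sub>v y') $ i"
      unfolding Q_def using i N H1c H2c H2_col1 by simp
    then show "Q $$ (i,1) = y i"
      using i by (simp add: H1_y')
  qed
  then show ?thesis
    using Qc Q_orth by blast
qed

section \<open>Normal form of nonsingular skew-symmetric matrices\<close>

definition skew_mat :: "nat \<Rightarrow> real mat \<Rightarrow> bool" where
  "skew_mat N W \<longleftrightarrow> W \<in> carrier_mat N N \<and> transpose_mat W = - W"

lemma skew_matD: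
  assumes "skew_mat N W" "i < N" "j < N"
  shows "W $$ (j,i) = - W $$ (i,j)"
proof -
  have W: "W \<in> carrier_mat N N" and "transpose_mat W = - W"
    using assms(1) unfolding skew_mat_def by auto
  then have "transpose_mat W $$ (i,j) = (- W) $$ (i,j)"
    by simp
  then show ?thesis
    using assms(2,3) W by simp
qed

lemma skew_mat_congruence:
  assumes W: "skew_mat N W" and P: "P \<in> carrier_mat N N"
  shows "skew_mat N (transpose_mat P * W * P)"
proof -
  have Wc: "W \<in> carrier_mat N N" and W_skew: "transpose_mat W = - W"
    using W unfolding skew_mat_def by auto
  have "transpose_mat (transpose_mat P * W * P) = transpose_mat P * transpose_mat (transpose_mat P * W)"
    using Wc P by (intro transpose_mult[of _ N N]) auto
  also have "transpose_mat (transpose_mat P * W) = - W * P"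
    using Wc P W_skew by (subst transpose_mult[of _ N N]) auto
  finally have "transpose_mat (transpose_mat P * W * P) = - (transpose_mat P * W * P)"
    using Wc P by (simp add: assoc_mult_mat[of _ N N _ N _ N])
  then show ?thesis
    using Wc P unfolding skew_mat_def by auto
qed

lemma det_congruence:
  fixes P W :: "real mat"
  assumes "P \<in> carrier_mat N N" "W \<in> carrier_mat N N"
  shows "det (transpose_mat P * W * P) = (det P)\<^sup>2 * det W"
  using assms by (simp add: det_mult[of _ N] det_transpose power2_eq_square)

lemma skew_bilinear:
  assumes "skew_mat N W"
  shows "(\<Sum>i<N. u i * (\<Sum>j<N. W $$ (i,j) * w j)) = - (\<Sum>i<N. w i * (\<Sum>j<N. W $$ (i,j) * u j))"
proof -
  have "(\<Sum>i<N. u i * (\<Sum>j<N. W $$ (i,j) * w j)) = (\<Sum>i<N. \<Sum>j<N. u i * W $$ (i,j) * w j)"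
    by (simp add: sum_distrib_left mult.assoc)
  also have "\<dots> = (\<Sum>j<N. \<Sum>i<N. u i * W $$ (i,j) * w j)"
    by (rule sum.swap)
  also have "\<dots> = (\<Sum>j<N. \<Sum>i<N. - (w j * (W $$ (j,i) * u i)))"
  proof (intro sum.cong refl)
    fix j i assume "j \<in> {..<N}" "i \<in> {..<N}"
    then show "u i * W $$ (i,j) * w j = - (w j * (W $$ (j,i) * u i))"
      using skew_matD[OF assms, of j i] by simp
  qed
  also have "\<dots> = - (\<Sum>i<N. w i * (\<Sum>j<N. W $$ (i,j) * u j))"
    by (simp add: sum_distrib_left sum_negf)
  finally show ?thesis .
qed

lemma det_nonzero_mult_eq_0:
  fixes W :: "real mat"
  assumes W: "W \<in> carrier_mat N N" and det: "det W \<noteq> 0"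
    and rows: "\<forall>i<N. (\<Sum>j<N. W $$ (i,j) * u j) = 0"
  shows "\<forall>i<N. u i = 0"
proof -
  have "W *\<^sub>v vec N u = 0\<^sub>v N"
    using W rows by (intro eq_vecI) (auto simp: scalar_prod_def atLeast0LessThan)
  moreover have "vec N u \<in> carrier_vec N"
    by simp
  ultimately have "vec N u = 0\<^sub>v N"
    using det det_0_iff_vec_prod_zero[OF W] by blast
  then show ?thesis
    by (metis index_vec index_zero_vec(1))
qed

lemma real_mat_eigenpair:
  fixes W :: "real mat"
  assumes W: "W \<in> carrier_mat N N" and N: "0 < N"
  obtains x y :: "nat \<Rightarrow> real" and a c where "(\<Sum>i<N. (x i)\<^sup>2) + (\<Sum>i<N. (y i)\<^sup>2) > 0"
    "\<forall>i<N. (\<Sum>j<N. W $$ (i,j) * x j) = a * x i - c * y i"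
    "\<forall>i<N. (\<Sum>j<N. W $$ (i,j) * y j) = a * y i + c * x i"
proof -
  let ?W = "map_mat complex_of_real W"
  have Wc: "?W \<in> carrier_mat N N"
    using W by simp
  from spectrum_non_empty[OF Wc N] obtain lam where "eigenvalue ?W lam"
    unfolding spectrum_def by auto
  then obtain v where v: "v \<in> carrier_vec N" "v \<noteq> 0\<^sub>v N" and ev: "?W *\<^sub>v v = lam \<cdot>\<^sub>v v"
    unfolding eigenvalue_def eigenvector_def using Wc by auto
  define x where "x j = Re (v $ j)" for j
  define y where "y j = Im (v $ j)" for j
  have row: "(\<Sum>j<N. complex_of_real (W $$ (i,j)) * v $ j) = lam * v $ i" if i: "i < N" for i
  proof -
    have "(?W *\<^sub>v v) $ i = (\<Sum>j<N. complex_of_real (W $$ (i,j)) * v $ j)"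
      using i W v by (simp add: scalar_prod_def atLeast0LessThan)
    then show ?thesis
      using ev i v by simp
  qed
  have "\<forall>i<N. (\<Sum>j<N. W $$ (i,j) * x j) = Re lam * x i - Im lam * y i"
    using arg_cong[OF row, of _ Re] by (simp add: Re_sum x_def y_def)
  moreover have "\<forall>i<N. (\<Sum>j<N. W $$ (i,j) * y j) = Re lam * y i + Im lam * x i"
    using arg_cong[OF row, of _ Im] by (simp add: Im_sum x_def y_def algebra_simps)
  moreover have "(\<Sum>i<N. (x i)\<^sup>2) + (\<Sum>i<N. (y i)\<^sup>2) > 0"
  proof -
    obtain i where i: "i < N" and vi: "v $ i \<noteq> 0"
      using v by (metis eq_vecI carrier_vecD index_zero_vec)
    then have "0 < (x i)\<^sup>2 + (y i)\<^sup>2"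
      unfolding x_def y_def by (auto simp: complex_eq_iff sum_power2_gt_zero_iff)
    also have "\<dots> \<le> (\<Sum>i<N. (x i)\<^sup>2) + (\<Sum>i<N. (y i)\<^sup>2)"
      using i by (intro add_mono member_le_sum) auto
    finally show ?thesis .
  qed
  ultimately show ?thesis
    using that by blast
qed

lemma skew_mat_eigenpair_relations:
  assumes W: "skew_mat N W" and det: "det W \<noteq> 0"
    and Wx: "\<forall>i<N. (\<Sum>j<N. W $$ (i,j) * x j) = a * x i - c * y i"
    and Wy: "\<forall>i<N. (\<Sum>j<N. W $$ (i,j) * y j) = a * y i + c * x i"
    and pos: "(\<Sum>i<N. (x i)\<^sup>2) + (\<Sum>i<N. (y i)\<^sup>2) > 0"
  shows "a = 0" "c \<noteq> 0" "(\<Sum>i<N. x i * y i) = 0" "(\<Sum>i<N. (x i)\<^sup>2) = (\<Sum>i<N. (y i)\<^sup>2)"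
proof -
  define X where "X = (\<Sum>i<N. (x i)\<^sup>2)"
  define Y where "Y = (\<Sum>i<N. (y i)\<^sup>2)"
  define P where "P = (\<Sum>i<N. x i * y i)"
  have form: "(\<Sum>i<N. u i * (\<Sum>j<N. W $$ (i,j) * w j)) = (\<Sum>i<N. u i * f i)"
    if "\<forall>i<N. (\<Sum>j<N. W $$ (i,j) * w j) = f i" for u w f
    using that by (intro sum.cong) auto
  have xWx: "(\<Sum>i<N. x i * (\<Sum>j<N. W $$ (i,j) * x j)) = a * X - c * P"
    unfolding form[OF Wx] X_def P_def
    by (simp add: sum_subtractf sum_distrib_left algebra_simps power2_eq_square)
  have yWy: "(\<Sum>i<N. y i * (\<Sum>j<N. W $$ (i,j) * y j)) = a * Y + c * P"
    unfolding form[OF Wy] Y_def P_def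
    by (simp add: sum.distrib sum_distrib_left algebra_simps power2_eq_square)
  have xWy: "(\<Sum>i<N. x i * (\<Sum>j<N. W $$ (i,j) * y j)) = a * P + c * X"
    unfolding form[OF Wy] X_def P_def
    by (simp add: sum.distrib sum_distrib_left algebra_simps power2_eq_square)
  have yWx: "(\<Sum>i<N. y i * (\<Sum>j<N. W $$ (i,j) * x j)) = a * P - c * Y"
    unfolding form[OF Wx] Y_def P_def
    by (simp add: sum_subtractf sum_distrib_left algebra_simps power2_eq_square)
  have "a * X - c * P = 0" "a * Y + c * P = 0"
    using skew_bilinear[OF W, of x x] skew_bilinear[OF W, of y y] xWx yWy by linarith+
  then have "a * (X + Y) = 0"
    by (simp add: algebra_simps)
  then show a: "a = 0"
    using pos unfolding X_def Y_def by simp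
  show c: "c \<noteq> 0"
  proof
    assume "c = 0"
    have Wc: "W \<in> carrier_mat N N"
      using W unfolding skew_mat_def by auto
    have "\<forall>i<N. x i = 0" "\<forall>i<N. y i = 0"
      using det_nonzero_mult_eq_0[OF Wc det] Wx Wy a \<open>c = 0\<close> by simp_all
    then show False
      using pos by simp
  qed
  show "(\<Sum>i<N. x i * y i) = 0"
    using \<open>a * X - c * P = 0\<close> a c unfolding P_def by simp
  show "(\<Sum>i<N. (x i)\<^sup>2) = (\<Sum>i<N. (y i)\<^sup>2)"
    using skew_bilinear[OF W, of x y] xWy yWx a c unfolding X_def Y_def by simp
qed

lemma skew_mat_invariant_plane:
  assumes W: "skew_mat N W" and det: "det W \<noteq> 0" and N: "0 < N"
  shows "\<exists>x y b. b > 0 \<and> (\<Sum>i<N. (x i)\<^sup>2) = 1 \<and> (\<Sum>i<N. (y i)\<^sup>2) = 1 \<and> (\<Sum>i<N. x i * y i) = 0 \<and>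
     (\<forall>i<N. (\<Sum>j<N. W $$ (i,j) * x j) = - b * y i) \<and> (\<forall>i<N. (\<Sum>j<N. W $$ (i,j) * y j) = b * x i)"
proof -
  have Wc: "W \<in> carrier_mat N N"
    using W unfolding skew_mat_def by auto
  obtain x y a c where pos: "(\<Sum>i<N. (x i)\<^sup>2) + (\<Sum>i<N. (y i)\<^sup>2) > 0"
    and Wx: "\<forall>i<N. (\<Sum>j<N. W $$ (i,j) * x j) = a * x i - c * y i"
    and Wy: "\<forall>i<N. (\<Sum>j<N. W $$ (i,j) * y j) = a * y i + c * x i"
    using real_mat_eigenpair[OF Wc N] by blast
  note rel = skew_mat_eigenpair_relations[OF W det Wx Wy pos]
  have P: "(\<Sum>i<N. x i * y i) = 0" and XY: "(\<Sum>i<N. (x i)\<^sup>2) = (\<Sum>i<N. (y i)\<^sup>2)"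
    using rel(3,4) .
  define s where "s = sqrt (\<Sum>i<N. (x i)\<^sup>2)"
  have X_pos: "(\<Sum>i<N. (x i)\<^sup>2) > 0"
    using pos XY by simp
  then have s: "s > 0" "s\<^sup>2 = (\<Sum>i<N. (x i)\<^sup>2)"
    unfolding s_def by auto
  define x' where "x' i = x i / s" for i
  define y' where "y' i = y i / s" for i
  have unit: "(\<Sum>i<N. (x' i)\<^sup>2) = 1" "(\<Sum>i<N. (y' i)\<^sup>2) = 1"
    unfolding x'_def y'_def using s XY X_pos by (simp_all add: power_divide flip: sum_divide_distrib)
  have orth: "(\<Sum>i<N. x' i * y' i) = 0" "(\<Sum>i<N. y' i * x' i) = 0"
    unfolding x'_def y'_def using P by (simp_all add: mult.commute flip: sum_divide_distrib)
  have Wx': "\<forall>i<N. (\<Sum>j<N. W $$ (i,j) * x' j) = - c * y' i"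
    and Wy': "\<forall>i<N. (\<Sum>j<N. W $$ (i,j) * y' j) = c * x' i"
    unfolding x'_def y'_def using Wx Wy rel(1) by (simp_all flip: sum_divide_distrib)
  show ?thesis
  proof (cases "c > 0")
    case True
    then show ?thesis
      using unit orth Wx' Wy' by (intro exI[of _ x'] exI[of _ y'] exI[of _ c]) simp
  next
    case False
    then have "- c > 0"
      using rel(2) by simp
    moreover have "\<forall>i<N. (\<Sum>j<N. W $$ (i,j) * y' j) = - (- c) * x' i"
      "\<forall>i<N. (\<Sum>j<N. W $$ (i,j) * x' j) = (- c) * y' i"
      using Wx' Wy' by simp_all
    ultimately show ?thesis
      using unit orth by (intro exI[of _ y'] exI[of _ x'] exI[of _ "- c"]) simp
  qed
qed

(* Block diagonal with the 2 x 2 blocks [0, s k; - s k, 0]. *)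
definition skew_blocks :: "nat \<Rightarrow> (nat \<Rightarrow> real) \<Rightarrow> real mat" where
  "skew_blocks N s = mat N N (\<lambda>(i,j).
     if even i \<and> j = Suc i then s (i div 2) else if odd i \<and> i = Suc j then - s (i div 2) else 0)"

lemma skew_blocks_carrier[simp]: "skew_blocks N s \<in> carrier_mat N N"
  by (simp add: skew_blocks_def)

lemma skew_blocks_dims[simp]: "dim_row (skew_blocks N s) = N" "dim_col (skew_blocks N s) = N"
  by (simp_all add: skew_blocks_def)

lemma skew_blocks_Cons:
  "four_block_mat (skew_blocks 2 (\<lambda>_. b)) (0\<^sub>m 2 m) (0\<^sub>m m 2) (skew_blocks m s)
     = skew_blocks (2 + m) (\<lambda>k. if k = 0 then b else s (k - 1))"
proof (rule eq_matI)
  fix i j assume "i < dim_row (skew_blocks (2 + m) (\<lambda>k. if k = 0 then b else s (k - 1)))"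
    "j < dim_col (skew_blocks (2 + m) (\<lambda>k. if k = 0 then b else s (k - 1)))"
  then have i: "i < 2 + m" and j: "j < 2 + m"
    by auto
  consider "i < 2" | "j < 2" | "2 \<le> i" "2 \<le> j"
    by linarith
  then show "four_block_mat (skew_blocks 2 (\<lambda>_. b)) (0\<^sub>m 2 m) (0\<^sub>m m 2) (skew_blocks m s) $$ (i,j)
      = skew_blocks (2 + m) (\<lambda>k. if k = 0 then b else s (k - 1)) $$ (i,j)"
  proof cases
    case 1
    then show ?thesis
      using i j by (cases "j < 2") (auto simp: skew_blocks_def)
  next
    case 2
    then have "j = 0 \<or> j = 1"
      by auto
    then show ?thesis
      using i j by (elim disjE) (auto simp: skew_blocks_def)
  next
    case 3
    then obtain i' j' where "i = 2 + i'" "j = 2 + j'"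
      using le_Suc_ex by blast
    then show ?thesis
      using i j by (auto simp: skew_blocks_def)
  qed
qed auto

lemma orthonormal_mat_columns:
  fixes Q :: "real mat"
  assumes Q: "Q \<in> carrier_mat N N" and Q_orth: "transpose_mat Q * Q = 1\<^sub>m N" and i: "i < N" and j: "j < N"
  shows "(\<Sum>a<N. Q $$ (a,i) * Q $$ (a,j)) = (if i = j then 1 else 0)"
proof -
  have "(transpose_mat Q * Q) $$ (i,j) = (\<Sum>a<N. transpose_mat Q $$ (i,a) * Q $$ (a,j))"
    using Q i j by (intro index_mult_mat_sum) auto
  also have "\<dots> = (\<Sum>a<N. Q $$ (a,i) * Q $$ (a,j))"
    using Q i by (intro sum.cong refl) auto
  finally show ?thesis
    using Q_orth i j by simp
qed

lemma congruence_column_eigen: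
  fixes Q W :: "real mat"
  assumes Q: "Q \<in> carrier_mat N N" and Q_orth: "transpose_mat Q * Q = 1\<^sub>m N" and W: "W \<in> carrier_mat N N"
    and i: "i < N" and k: "k < N" and l: "l < N"
    and WQ: "\<forall>a<N. (\<Sum>c<N. W $$ (a,c) * Q $$ (c,k)) = \<mu> * Q $$ (a,l)"
  shows "(transpose_mat Q * W * Q) $$ (i,k) = (if i = l then \<mu> else 0)"
proof -
  have "(transpose_mat Q * W * Q) $$ (i,k) = (\<Sum>a<N. \<Sum>c<N. Q $$ (a,i) * W $$ (a,c) * Q $$ (c,k))"
    by (rule index_congruence_sum[OF Q W Q i k])
  also have "\<dots> = (\<Sum>a<N. Q $$ (a,i) * (\<mu> * Q $$ (a,l)))"
    using WQ by (intro sum.cong refl) (simp add: mult.assoc flip: sum_distrib_left)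
  also have "\<dots> = \<mu> * (\<Sum>a<N. Q $$ (a,i) * Q $$ (a,l))"
    by (simp add: sum_distrib_left mult_ac)
  finally show ?thesis
    using orthonormal_mat_columns[OF Q Q_orth i l] by simp
qed

lemma det_orthonormal_mat:
  fixes Q :: "real mat"
  assumes Q: "Q \<in> carrier_mat N N" and Q_orth: "transpose_mat Q * Q = 1\<^sub>m N"
  shows "(det Q)\<^sup>2 = 1"
  using det_mult[of "transpose_mat Q" N Q] det_transpose[OF Q] Q_orth Q by (simp add: power2_eq_square)

lemma skew_mat_block_of_columns:
  assumes W: "skew_mat (2 + m) W"
    and col0: "\<And>i. i < 2 + m \<Longrightarrow> W $$ (i,0) = (if i = 1 then - b else 0)"
    and col1: "\<And>i. i < 2 + m \<Longrightarrow> W $$ (i,1) = (if i = 0 then b else 0)"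
  defines "W2 \<equiv> mat m m (\<lambda>(i,j). W $$ (i + 2, j + 2))"
  shows "W = four_block_mat (skew_blocks 2 (\<lambda>_. b)) (0\<^sub>m 2 m) (0\<^sub>m m 2) W2"
proof (rule eq_matI)
  have Wc: "W \<in> carrier_mat (2 + m) (2 + m)"
    using W unfolding skew_mat_def by auto
  fix i j assume "i < dim_row (four_block_mat (skew_blocks 2 (\<lambda>_. b)) (0\<^sub>m 2 m) (0\<^sub>m m 2) W2)"
    "j < dim_col (four_block_mat (skew_blocks 2 (\<lambda>_. b)) (0\<^sub>m 2 m) (0\<^sub>m m 2) W2)"
  then have i: "i < 2 + m" and j: "j < 2 + m"
    unfolding W2_def by auto
  have W2c: "W2 \<in> carrier_mat m m"
    unfolding W2_def by simp
  have row0: "W $$ (0,j) = (if j = 1 then b else 0)" and row1: "W $$ (1,j) = (if j = 0 then - b else 0)"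
    using skew_matD[OF W j, of 0] skew_matD[OF W j, of 1] col0[OF j] col1[OF j] by auto
  consider "i = 0" | "i = 1" | "j = 0" | "j = 1" | "2 \<le> i" "2 \<le> j"
    by linarith
  then show "W $$ (i,j) = four_block_mat (skew_blocks 2 (\<lambda>_. b)) (0\<^sub>m 2 m) (0\<^sub>m m 2) W2 $$ (i,j)"
  proof cases
    case 5
    then have "Suc (Suc (i - 2)) = i" "Suc (Suc (j - 2)) = j"
      by arith+
    with i j 5 show ?thesis
      by (simp add: W2_def)
  qed (use i j W2c row0 row1 col0[OF i] col1[OF i] in \<open>auto simp: skew_blocks_def\<close>)
qed (use W in \<open>auto simp: W2_def skew_mat_def\<close>)

lemma skew_mat_lower_block:
  assumes W: "skew_mat (2 + m) W"
  shows "skew_mat m (mat m m (\<lambda>(i,j). W $$ (i + 2, j + 2)))"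
  unfolding skew_mat_def
proof (intro conjI eq_matI)
  fix i j assume "i < dim_row (- mat m m (\<lambda>(i,j). W $$ (i + 2, j + 2)))"
    "j < dim_col (- mat m m (\<lambda>(i,j). W $$ (i + 2, j + 2)))"
  then show "transpose_mat (mat m m (\<lambda>(i,j). W $$ (i + 2, j + 2))) $$ (i,j)
      = (- mat m m (\<lambda>(i,j). W $$ (i + 2, j + 2))) $$ (i,j)"
    using skew_matD[OF W, of "i + 2" "j + 2"] by simp
qed auto

lemma skew_mat_split_plane:
  assumes "skew_mat (2 + m) W" and det: "det W \<noteq> 0"
  shows "\<exists>Q b W2. Q \<in> carrier_mat (2 + m) (2 + m) \<and> transpose_mat Q * Q = 1\<^sub>m (2 + m) \<and> b > 0 \<and>
    skew_mat m W2 \<and> det W2 \<noteq> 0 \<and>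
    transpose_mat Q * W * Q = four_block_mat (skew_blocks 2 (\<lambda>_. b)) (0\<^sub>m 2 m) (0\<^sub>m m 2) W2"
proof -
  define N where "N = 2 + m"
  have W: "skew_mat N W" and N: "1 < N"
    using assms(1) unfolding N_def by auto
  have Wc: "W \<in> carrier_mat N N"
    using W unfolding skew_mat_def by auto
  obtain x y b where b: "b > 0" and x1: "(\<Sum>i<N. (x i)\<^sup>2) = 1" and y1: "(\<Sum>i<N. (y i)\<^sup>2) = 1"
    and xy: "(\<Sum>i<N. x i * y i) = 0" and Wx: "\<forall>i<N. (\<Sum>j<N. W $$ (i,j) * x j) = - b * y i"
    and Wy: "\<forall>i<N. (\<Sum>j<N. W $$ (i,j) * y j) = b * x i"
    using skew_mat_invariant_plane[OF W det] N by auto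
  obtain Q where Qc: "Q \<in> carrier_mat N N" and Q_orth: "transpose_mat Q * Q = 1\<^sub>m N"
    and Qxy: "\<forall>i<N. Q $$ (i,0) = x i \<and> Q $$ (i,1) = y i"
    using orthonormal_mat_with_columns[OF N x1 y1 xy] by auto
  define W1 where "W1 = transpose_mat Q * W * Q"
  have W1: "skew_mat N W1"
    unfolding W1_def by (rule skew_mat_congruence[OF W Qc])
  have col0: "W1 $$ (i,0) = (if i = 1 then - b else 0)" if "i < N" for i
    unfolding W1_def using Wx Qxy N by (intro congruence_column_eigen[OF Qc Q_orth Wc that]) auto
  have col1: "W1 $$ (i,1) = (if i = 0 then b else 0)" if "i < N" for i
    unfolding W1_def using Wy Qxy N by (intro congruence_column_eigen[OF Qc Q_orth Wc that]) auto
  define W2 where "W2 = mat m m (\<lambda>(i,j). W1 $$ (i + 2, j + 2))"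
  have W1_eq: "W1 = four_block_mat (skew_blocks 2 (\<lambda>_. b)) (0\<^sub>m 2 m) (0\<^sub>m m 2) W2"
    unfolding W2_def using W1 col0 col1 unfolding N_def by (rule skew_mat_block_of_columns)
  have "det W1 \<noteq> 0"
    unfolding W1_def det_congruence[OF Qc Wc] using det det_orthonormal_mat[OF Qc Q_orth] by simp
  moreover have "det W1 = det (skew_blocks 2 (\<lambda>_. b)) * det W2"
    unfolding W1_eq by (rule det_four_block_mat_upper_right_zero) (auto simp: W2_def)
  ultimately have "det W2 \<noteq> 0"
    by auto
  moreover have "skew_mat m W2"
    unfolding W2_def using W1 unfolding N_def by (rule skew_mat_lower_block)
  ultimately show ?thesis
    using Qc Q_orth b W1_eq unfolding W1_def N_def
    by (intro exI[of _ Q] exI[of _ b] exI[of _ W2]) simp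
qed

section \<open>Williamson's theorem\<close>

(* Moves the coordinate order (x_1, ..., x_n, p_1, ..., p_n) of J to the order
   (x_1, p_1, ..., x_n, p_n) of skew_blocks. *)
definition interleave :: "nat \<Rightarrow> nat \<Rightarrow> nat" where
  "interleave n j = (if j < n then 2 * j else 2 * (j - n) + 1)"

lemma interleave_less: "j < 2 * n \<Longrightarrow> interleave n j < 2 * n"
  unfolding interleave_def by auto

lemma interleave_eq_iff: "i < 2 * n \<Longrightarrow> j < 2 * n \<Longrightarrow> interleave n i = interleave n j \<longleftrightarrow> i = j"
  unfolding interleave_def by (cases "i < n"; cases "j < n") (simp_all, presburger+)

lemma skew_blocks_interleave:
  assumes i: "i < 2 * n" and j: "j < 2 * n"
  shows "skew_blocks (2 * n) s $$ (interleave n i, interleave n j)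
       = (if i < n \<and> j = i + n then s i else if n \<le> i \<and> i = j + n then - s j else 0)"
proof -
  have "even (interleave n i) \<and> interleave n j = Suc (interleave n i) \<longleftrightarrow> i < n \<and> j = i + n"
    using i j unfolding interleave_def by (cases "i < n"; cases "j < n") (simp_all, presburger+)
  moreover have "odd (interleave n i) \<and> interleave n i = Suc (interleave n j) \<longleftrightarrow> n \<le> i \<and> i = j + n"
    using i j unfolding interleave_def by (cases "i < n"; cases "j < n") (simp_all, presburger+)
  moreover have "interleave n i div 2 = (if i < n then i else i - n)"
    unfolding interleave_def by simp
  ultimately show ?thesis
    using interleave_less[OF i] interleave_less[OF j] by (auto simp: skew_blocks_def)
qed

definition williamson_scaling :: "nat \<Rightarrow> (nat \<Rightarrow> real) \<Rightarrow> real mat" where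
  "williamson_scaling n s = monomial_mat (2*n) (interleave n) (\<lambda>j. 1 / sqrt (s (j mod n)))"

lemma williamson_scaling_carrier[simp]: "williamson_scaling n s \<in> carrier_mat (2*n) (2*n)"
  by (simp add: williamson_scaling_def)

lemma congruence_williamson_scaling:
  assumes "X \<in> carrier_mat (2*n) (2*n)"
  shows "transpose_mat (williamson_scaling n s) * X * williamson_scaling n s = mat (2*n) (2*n)
    (\<lambda>(i,j). 1 / sqrt (s (i mod n)) * (1 / sqrt (s (j mod n))) * X $$ (interleave n i, interleave n j))"
  unfolding williamson_scaling_def by (rule congruence_monomial_mat[OF assms interleave_less])

lemma congruence_williamson_scaling_skew_blocks:
  assumes s: "\<forall>k<n. s k > 0"
  shows "transpose_mat (williamson_scaling n s) * skew_blocks (2*n) s * williamson_scaling n s = Jmat n"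
  unfolding congruence_williamson_scaling[OF skew_blocks_carrier]
proof (rule eq_matI)
  fix i j assume "i < dim_row (Jmat n)" "j < dim_col (Jmat n)"
  then have i: "i < 2*n" and j: "j < 2*n" by auto
  have sqrt: "1 / sqrt (s k) * (1 / sqrt (s k)) * s k = 1" if "k < n" for k
    using s[rule_format, OF that] by (simp add: field_simps)
  show "mat (2*n) (2*n) (\<lambda>(i,j). 1 / sqrt (s (i mod n)) * (1 / sqrt (s (j mod n))) *
      skew_blocks (2*n) s $$ (interleave n i, interleave n j)) $$ (i,j) = Jmat n $$ (i,j)"
    unfolding index_mat(1)[OF i j] split skew_blocks_interleave[OF i j] index_Jmat[OF i j]
    using sqrt[of i] sqrt[of j] i j by (auto simp: mult.commute)
qed auto

lemma congruence_williamson_scaling_one: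
  assumes s: "\<forall>k<n. s k > 0"
  shows "transpose_mat (williamson_scaling n s) * williamson_scaling n s
       = dsum (diagm (map (\<lambda>k. 1 / s k) [0..<n])) (diagm (map (\<lambda>k. 1 / s k) [0..<n]))"
proof -
  let ?L = "map (\<lambda>k. 1 / s k) [0..<n]"
  have "transpose_mat (williamson_scaling n s) * 1\<^sub>m (2*n) * williamson_scaling n s = dsum (diagm ?L) (diagm ?L)"
    unfolding congruence_williamson_scaling[OF one_carrier_mat]
  proof (rule eq_matI)
    fix i j assume "i < dim_row (dsum (diagm ?L) (diagm ?L))" "j < dim_col (dsum (diagm ?L) (diagm ?L))"
    then have i: "i < 2*n" and j: "j < 2*n"
      using dsum_diagm_carrier[of ?L] by auto
    then have "i mod n < n"
      by (cases "n = 0") auto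
    then have "1 / sqrt (s (i mod n)) * (1 / sqrt (s (i mod n))) = ?L ! (i mod n)"
      using s[rule_format, of "i mod n"] by (simp add: field_simps)
    then show "mat (2*n) (2*n) (\<lambda>(i,j). 1 / sqrt (s (i mod n)) * (1 / sqrt (s (j mod n))) *
        1\<^sub>m (2*n) $$ (interleave n i, interleave n j)) $$ (i,j) = dsum (diagm ?L) (diagm ?L) $$ (i,j)"
      using i j interleave_less[OF i] interleave_less[OF j]
      by (cases "i = j") (simp_all add: index_dsum_diagm[of _ n] interleave_eq_iff)
  qed (auto simp: dsum_def diagm_def mat_diag_def mult_2)
  then show ?thesis
    using williamson_scaling_carrier[of n s] by simp
qed

lemma congruence_skew_blocks_Cons:
  fixes Q W U2 W2 :: "real mat"
  assumes Qc: "Q \<in> carrier_mat (2 + m) (2 + m)" and Q_orth: "transpose_mat Q * Q = 1\<^sub>m (2 + m)"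
    and Wc: "W \<in> carrier_mat (2 + m) (2 + m)"
    and QWQ: "transpose_mat Q * W * Q = four_block_mat (skew_blocks 2 (\<lambda>_. b)) (0\<^sub>m 2 m) (0\<^sub>m m 2) W2"
    and U2c: "U2 \<in> carrier_mat m m" and U2_orth: "transpose_mat U2 * U2 = 1\<^sub>m m"
    and W2c: "W2 \<in> carrier_mat m m" and U2W2: "transpose_mat U2 * W2 * U2 = skew_blocks m s"
  defines "U \<equiv> Q * four_block_mat (1\<^sub>m 2) (0\<^sub>m 2 m) (0\<^sub>m m 2) U2"
  shows "U \<in> carrier_mat (2 + m) (2 + m)" "transpose_mat U * U = 1\<^sub>m (2 + m)"
    "transpose_mat U * W * U = skew_blocks (2 + m) (\<lambda>k. if k = 0 then b else s (k - 1))"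
proof -
  define E where "E = four_block_mat (1\<^sub>m 2) (0\<^sub>m 2 m) (0\<^sub>m m 2) U2"
  have Ec: "E \<in> carrier_mat (2 + m) (2 + m)"
    unfolding E_def using U2c by auto
  then show "U \<in> carrier_mat (2 + m) (2 + m)"
    unfolding U_def E_def[symmetric] using Qc by simp
  have "transpose_mat E * four_block_mat (1\<^sub>m 2) (0\<^sub>m 2 m) (0\<^sub>m m 2) (1\<^sub>m m) * E
      = four_block_mat (transpose_mat (1\<^sub>m 2) * 1\<^sub>m 2 * 1\<^sub>m 2) (0\<^sub>m 2 m) (0\<^sub>m m 2) (transpose_mat U2 * 1\<^sub>m m * U2)"
    unfolding E_def by (rule congruence_block_diag) (use U2c in auto)
  then have "transpose_mat E * 1\<^sub>m (2 + m) * E = 1\<^sub>m (2 + m)"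
    using U2c U2_orth by simp
  moreover have "transpose_mat U * 1\<^sub>m (2 + m) * U = transpose_mat E * 1\<^sub>m (2 + m) * E"
    unfolding U_def E_def[symmetric] using congruence_mult[OF Qc Ec, of "1\<^sub>m (2 + m)"] Qc Q_orth by simp
  ultimately show "transpose_mat U * U = 1\<^sub>m (2 + m)"
    using Qc Ec unfolding U_def E_def[symmetric] by simp
  have "transpose_mat U * W * U = transpose_mat E * (transpose_mat Q * W * Q) * E"
    unfolding U_def E_def[symmetric] using Wc Qc Ec by (simp add: congruence_mult)
  also have "\<dots> = four_block_mat (skew_blocks 2 (\<lambda>_. b)) (0\<^sub>m 2 m) (0\<^sub>m m 2) (skew_blocks m s)"
    unfolding QWQ E_def U2W2[symmetric] using U2c W2c by (subst congruence_block_diag) auto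
  also have "\<dots> = skew_blocks (2 + m) (\<lambda>k. if k = 0 then b else s (k - 1))"
    by (rule skew_blocks_Cons)
  finally show "transpose_mat U * W * U = skew_blocks (2 + m) (\<lambda>k. if k = 0 then b else s (k - 1))" .
qed

theorem skew_mat_normal_form:
  "skew_mat N W \<Longrightarrow> det W \<noteq> 0 \<Longrightarrow> even N \<and> (\<exists>U s. U \<in> carrier_mat N N \<and> transpose_mat U * U = 1\<^sub>m N \<and>
     (\<forall>k < N div 2. s k > 0) \<and> transpose_mat U * W * U = skew_blocks N s)"
proof (induction N arbitrary: W rule: less_induct)
  case (less N)
  have Wc: "W \<in> carrier_mat N N"
    using less.prems(1) unfolding skew_mat_def by auto
  consider "N = 0" | "N = 1" | "2 \<le> N"
    by linarith
  then show ?case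
  proof cases
    case 1
    have "transpose_mat (1\<^sub>m N) * W * 1\<^sub>m N = skew_blocks N (\<lambda>_. 1)"
      using 1 Wc by (intro eq_matI) auto
    then show ?thesis
      using 1 by (intro conjI exI[of _ "1\<^sub>m N"] exI[of _ "\<lambda>_. 1::real"]) auto
  next
    case 2
    have "W $$ (0,0) = 0"
      using skew_matD[OF less.prems(1), of 0 0] 2 by simp
    then have "W = 0\<^sub>m 1 1"
      using Wc 2 by (intro eq_matI) auto
    then show ?thesis
      using less.prems(2) by simp
  next
    case 3
    define m where "m = N - 2"
    have N: "N = 2 + m"
      using 3 unfolding m_def by simp
    obtain Q b W2 where Qc: "Q \<in> carrier_mat (2 + m) (2 + m)" and Q_orth: "transpose_mat Q * Q = 1\<^sub>m (2 + m)"
      and b: "b > 0" and W2: "skew_mat m W2" "det W2 \<noteq> 0"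
      and QWQ: "transpose_mat Q * W * Q = four_block_mat (skew_blocks 2 (\<lambda>_. b)) (0\<^sub>m 2 m) (0\<^sub>m m 2) W2"
      using skew_mat_split_plane[of m W] less.prems unfolding N by blast
    obtain U2 s2 where "even m" and U2c: "U2 \<in> carrier_mat m m" and U2_orth: "transpose_mat U2 * U2 = 1\<^sub>m m"
      and s2: "\<forall>k < m div 2. s2 k > 0" and U2W2: "transpose_mat U2 * W2 * U2 = skew_blocks m s2"
      using less.IH[of m W2] W2 N by auto
    have W2c: "W2 \<in> carrier_mat m m"
      using W2 unfolding skew_mat_def by auto
    note U = congruence_skew_blocks_Cons[OF Qc Q_orth Wc[unfolded N] QWQ U2c U2_orth W2c U2W2]
    have "\<forall>k < (2 + m) div 2. (if k = 0 then b else s2 (k - 1)) > 0"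
      using b s2 by (auto simp: less_Suc_eq_0_disj)
    then show ?thesis
      using \<open>even m\<close> U unfolding N
      by (intro conjI exI[of _ "Q * four_block_mat (1\<^sub>m 2) (0\<^sub>m 2 m) (0\<^sub>m m 2) U2"]
          exI[of _ "\<lambda>k. if k = 0 then b else s2 (k - 1)"]) auto
  qed
qed

lemma skew_mat_Jmat: "skew_mat (2*n) (Jmat n)"
  unfolding skew_mat_def by (auto intro!: eq_matI simp: index_Jmat)

lemma det_Jmat_nonzero: "det (Jmat n) \<noteq> 0"
proof -
  have "det (transpose_mat (Jmat n)) * det (Jmat n) = 1"
    using det_mult[of "transpose_mat (Jmat n)" "2*n" "Jmat n"] by (simp add: transpose_Jmat_mult_Jmat)
  then show ?thesis
    by auto
qed

lemma williamson:
  assumes B: "pos_def (2*n) B"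
  obtains ds M where "length ds = n" "\<forall>i<n. ds ! i > 0" "symplectic n M"
    "transpose_mat M * B * M = dsum (diagm ds) (diagm ds)"
proof -
  let ?N = "2*n"
  have Bc: "B \<in> carrier_mat ?N ?N"
    using B unfolding pos_def_def by auto
  obtain S where Sc: "S \<in> carrier_mat ?N ?N" and SBS: "transpose_mat S * B * S = 1\<^sub>m ?N"
    using pos_def_congruent_one[OF B] by blast
  define K where "K = transpose_mat S * Jmat n * S"
  have K: "skew_mat ?N K"
    unfolding K_def by (rule skew_mat_congruence[OF skew_mat_Jmat Sc])
  have "(det S)\<^sup>2 * det B = 1"
    using arg_cong[OF SBS, of det] by (simp add: det_congruence[OF Sc Bc])
  then have "det K \<noteq> 0"
    unfolding K_def det_congruence[OF Sc Jmat_carrier] using det_Jmat_nonzero by auto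
  then obtain U s where Uc: "U \<in> carrier_mat ?N ?N" and U_orth: "transpose_mat U * U = 1\<^sub>m ?N"
    and s: "\<forall>k<n. s k > 0" and UKU: "transpose_mat U * K * U = skew_blocks ?N s"
    using skew_mat_normal_form[OF K] by auto
  define T where "T = williamson_scaling n s"
  have Tc: "T \<in> carrier_mat ?N ?N"
    unfolding T_def by simp
  define M where "M = S * U * T"
  have M_cong: "transpose_mat M * X * M = transpose_mat T * (transpose_mat U * (transpose_mat S * X * S) * U) * T"
    if "X \<in> carrier_mat ?N ?N" for X
    unfolding M_def using Sc Uc Tc that by (simp add: congruence_mult[of _ ?N])
  have "transpose_mat M * Jmat n * M = Jmat n"
    unfolding M_cong[OF Jmat_carrier] K_def[symmetric] UKU T_def
    by (rule congruence_williamson_scaling_skew_blocks[OF s])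
  then have "symplectic n M"
    unfolding symplectic_def M_def using Sc Uc Tc by auto
  moreover have "transpose_mat M * B * M = dsum (diagm (map (\<lambda>k. 1 / s k) [0..<n])) (diagm (map (\<lambda>k. 1 / s k) [0..<n]))"
    unfolding M_cong[OF Bc] SBS using Uc U_orth carrier_matD[OF Tc]
    by (simp add: T_def congruence_williamson_scaling_one[OF s])
  moreover have "\<forall>i<n. map (\<lambda>k. 1 / s k) [0..<n] ! i > 0"
    using s by simp
  ultimately show ?thesis
    using that[of "map (\<lambda>k. 1 / s k) [0..<n]" M] by simp
qed

lemma sort_permutation:
  obtains p where "p permutes {..<length xs}" "permute_list p xs = sort xs"
  using mset_eq_permutation[of "sort xs" xs] by auto

(* The property chosen by the SOME in sympl_eigs. *)
lemma williamson_sorted: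
  assumes B: "pos_def (2*n) B"
  shows "\<exists>ds. length ds = n \<and> sorted ds \<and> (\<forall>i<n. ds ! i > 0) \<and>
      (\<exists>M. symplectic n M \<and> transpose_mat M * B * M = dsum (diagm ds) (diagm ds))"
proof -
  obtain ds M where len: "length ds = n" and pos: "\<forall>i<n. ds ! i > 0" and M: "symplectic n M"
    and MBM: "transpose_mat M * B * M = dsum (diagm ds) (diagm ds)"
    using williamson[OF B] by blast
  obtain p where p: "p permutes {..<n}" and p_sort: "permute_list p ds = sort ds"
    using sort_permutation[of ds] len by auto
  let ?P = "sympl_perm_mat n p"
  have Mc: "M \<in> carrier_mat (2*n) (2*n)" and Bc: "B \<in> carrier_mat (2*n) (2*n)"
    using M B unfolding symplectic_def pos_def_def by auto
  have "transpose_mat (M * ?P) * B * (M * ?P) = dsum (diagm (sort ds)) (diagm (sort ds))"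
    using congruence_sympl_perm_mat_dsum[OF p len] p_sort
    by (simp add: congruence_mult[OF Mc _ Bc] sympl_perm_mat_def MBM)
  moreover have "symplectic n (M * ?P)"
    by (rule symplectic_mult[OF M symplectic_sympl_perm_mat[OF p]])
  moreover have "\<forall>i<n. sort ds ! i > 0"
    using pos len by (metis in_set_conv_nth length_sort set_sort)
  ultimately show ?thesis
    using len by (intro exI[of _ "sort ds"]) auto
qed

lemma sympl_eigs_congruence:
  assumes "pos_def (2*n) B"
  obtains M where "symplectic n M"
    "transpose_mat M * B * M = dsum (diagm (sympl_eigs n B)) (diagm (sympl_eigs n B))"
  using someI_ex[OF williamson_sorted[OF assms]] that unfolding sympl_eigs_def by blast

lemma in_conv_sympl_orbit_of_sympl_eigs:
  assumes A: "pos_def (2*n) A" and comm: "A * Jmat n = Jmat n * A"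
    and B: "pos_def (2*n) B" and eigs: "sympl_eigs n B = sort (Delta \<xi> n A)"
  shows "in_conv_sympl_orbit n A B"
proof -
  let ?D = "Delta \<xi> n A"
  obtain M where M: "symplectic n M" and MBM: "transpose_mat M * B * M = dsum (diagm (sort ?D)) (diagm (sort ?D))"
    using sympl_eigs_congruence[OF B] unfolding eigs by blast
  obtain N where N: "symplectic n N" and MN: "M * N = 1\<^sub>m (2*n)"
    using symplectic_inverse[OF M] by blast
  have len: "length ?D = n"
    by (simp add: Delta_def)
  obtain p where p: "p permutes {..<n}" and p_sort: "permute_list p ?D = sort ?D"
    using sort_permutation[of ?D] len by auto
  let ?P = "sympl_perm_mat n p"
  have Ac: "A \<in> carrier_mat (2*n) (2*n)" and Bc: "B \<in> carrier_mat (2*n) (2*n)"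
    using A B unfolding pos_def_def by auto
  have Mc: "M \<in> carrier_mat (2*n) (2*n)" and Nc: "N \<in> carrier_mat (2*n) (2*n)"
    using M N unfolding symplectic_def by auto
  have "B = transpose_mat (M * N) * B * (M * N)"
    unfolding MN using Bc by simp
  also have "\<dots> = transpose_mat N * dsum (diagm (sort ?D)) (diagm (sort ?D)) * N"
    unfolding congruence_mult[OF Mc Nc Bc] MBM ..
  also have "\<dots> = transpose_mat (?P * N) * dsum (diagm ?D) (diagm ?D) * (?P * N)"
    using congruence_sympl_perm_mat_dsum[OF p len] dsum_diagm_carrier[of ?D] len p_sort
    by (simp add: congruence_mult[OF _ Nc] sympl_perm_mat_def)
  finally have "B = transpose_mat (?P * N) * dsum (diagm ?D) (diagm ?D) * (?P * N)" .
  then show ?thesis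
    using in_conv_sympl_orbit_congruence[OF dsum_Delta_in_conv_sympl_orbit[OF A comm]
        symplectic_mult[OF symplectic_sympl_perm_mat[OF p] N] Ac]
    by simp
qed

theorem corollary3p5:
  fixes n :: nat and A :: "real mat" and \<xi> :: mean_kind
  assumes "pos_def (2*n) A"
    and "A * Jmat n = Jmat n * A"
  shows "(\<forall>B. pos_def (2*n) B \<and> sympl_eigs n B = sort (Delta \<xi> n A) \<longrightarrow> in_conv_sympl_orbit n A B)
       \<and> in_conv_sympl_orbit n A (dsum (diagm (Delta \<xi> n A)) (diagm (Delta \<xi> n A)))"
  using in_conv_sympl_orbit_of_sympl_eigs[OF assms] dsum_Delta_in_conv_sympl_orbit[OF assms] by blast

end
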